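(* Assume model $\mathcal M_{\mathrm s}$ and Assumption A1, and let $V_0=0$, $V_{t+1}=\dfrac{q(X_{1,t+1})/p(X_{1,t+1})}{(1-\theta)(1-V_t)/(\theta+(1-\theta)V_t)+q(X_{1,t+1})/p(X_{1,t+1})}$. Then: (1) for each $t\ge1$, $(V_1,\dots,V_t)$ has a continuous and strictly positive joint Lebesgue density on $(0,1)^t$; (2) for any $(v_1,\dots,v_t)\in(0,1)^t$, $\mathbb P(V_1\le v_1,\dots,V_t\le v_t)>0$; (3) for any $(v_1,\dots,v_t)\in(0,1)^t$, the conditional distribution of $V_{t+1}$ given $\{V_1\le v_1,\dots,V_t\le v_t\}$ has a continuous and positive density on $(0,1)$.
   Context: Stream $1$ has observations $X_{1,t}$, $t=1,2,\dots$, and change point $\tau_1$. Model $\mathcal M_{\mathrm s}$ (for this stream): $\mathbb P(\tau_1=m)=\theta(1-\theta)^m$, $m=0,1,2,\dots$, $\theta\in(0,1)$; conditionally on $\tau_1$, the $X_{1,t}$ are independent with density $p$ if $t\le\tau_1$ and $q$ if $t>\tau_1$. Assumption A1: for $Z_1\sim p$ and $Z_2\sim q$, the likelihood ratios $q(Z_1)/p(Z_1)$ and $q(Z_2)/p(Z_2)$ have continuous and strictly positive Lebesgue densities on $\mathbb R_+$. *)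

theory Defs
  imports "HOL-Probability.Probability"
begin

definition LR :: "(real \<Rightarrow> real) \<Rightarrow> (real \<Rightarrow> real) \<Rightarrow> real \<Rightarrow> real" where
  "LR p q x = q x / p x"

primrec Vseq :: "real \<Rightarrow> (real \<Rightarrow> real) \<Rightarrow> (real \<Rightarrow> real) \<Rightarrow> (nat \<Rightarrow> 'a \<Rightarrow> real)
                  \<Rightarrow> nat \<Rightarrow> 'a \<Rightarrow> real" where
  "Vseq \<theta> p q X 0 \<omega> = 0"
| "Vseq \<theta> p q X (Suc t) \<omega> =
     LR p q (X (Suc t) \<omega>) /
       ((1 - \<theta>) * (1 - Vseq \<theta> p q X t \<omega>) / (\<theta> + (1 - \<theta>) * Vseq \<theta> p q X t \<omega>)
        + LR p q (X (Suc t) \<omega>))"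

text \<open>Model M_s for one stream: tau geometric(theta) on {0,1,...}; given tau, the
  observations X_1, X_2, ... are independent with density p for t \<le> tau and q for t > tau.\<close>
definition model_Ms :: "'a measure \<Rightarrow> real \<Rightarrow> (real \<Rightarrow> real) \<Rightarrow> (real \<Rightarrow> real)
                         \<Rightarrow> ('a \<Rightarrow> nat) \<Rightarrow> (nat \<Rightarrow> 'a \<Rightarrow> real) \<Rightarrow> bool" where
  "model_Ms M \<theta> p q \<tau> X \<longleftrightarrow>
     prob_space M \<and> 0 < \<theta> \<and> \<theta> < 1 \<and>
     p \<in> borel_measurable borel \<and> q \<in> borel_measurable borel \<and>
     (\<forall>x. 0 \<le> p x) \<and> (\<forall>x. 0 \<le> q x) \<and>
     (\<integral>\<^sup>+ x. ennreal (p x) \<partial>lborel) = 1 \<and> (\<integral>\<^sup>+ x. ennreal (q x) \<partial>lborel) = 1 \<and>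
     \<tau> \<in> measurable M (count_space UNIV) \<and>
     (\<forall>t. X t \<in> borel_measurable M) \<and>
     (\<forall>m n (B :: nat \<Rightarrow> real set). (\<forall>i\<in>{1..n}. B i \<in> sets borel) \<longrightarrow>
        measure M {\<omega> \<in> space M. \<tau> \<omega> = m \<and> (\<forall>i\<in>{1..n}. X i \<omega> \<in> B i)}
        = \<theta> * (1 - \<theta>) ^ m *
          (\<Prod>i\<in>{1..n}. measure (density lborel (\<lambda>x. ennreal (if i \<le> m then p x else q x))) (B i)))"

definition cont_pos_density_Rplus :: "'b measure \<Rightarrow> ('b \<Rightarrow> real) \<Rightarrow> bool" where
  "cont_pos_density_Rplus N Y \<longleftrightarrow>
     (\<exists>f :: real \<Rightarrow> real. distributed N lborel Y (\<lambda>y. ennreal (f y)) \<and>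
        continuous_on {0<..} f \<and> (\<forall>y>0. 0 < f y) \<and> (\<forall>y\<le>0. f y = 0))"

definition assumption_A1 :: "(real \<Rightarrow> real) \<Rightarrow> (real \<Rightarrow> real) \<Rightarrow> bool" where
  "assumption_A1 p q \<longleftrightarrow>
     cont_pos_density_Rplus (density lborel (\<lambda>x. ennreal (p x))) (LR p q) \<and>
     cont_pos_density_Rplus (density lborel (\<lambda>x. ennreal (q x))) (LR p q)"

definition unit_cube :: "nat \<Rightarrow> (nat \<Rightarrow> real) set" where
  "unit_cube t = PiE {1..t} (\<lambda>_. {0<..<1})"

end

theory Submission
  imports Defs
begin

text \<open>
Write \<open>A(w) = (1-\<theta>)(1-w)/(\<theta>+(1-\<theta>)w)\<close>, so that \<open>V\<^sub>t\<^sub>+\<^sub>1 = L/(A(V\<^sub>t) + L)\<close> with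
\<open>L = q(X\<^sub>t\<^sub>+\<^sub>1)/p(X\<^sub>t\<^sub>+\<^sub>1)\<close>, and \<open>A(w) > 0\<close> for \<open>w \<in> [0,1)\<close>. As \<open>z \<mapsto> z/(a+z)\<close> maps \<open>(0,\<infinity>)\<close>
increasingly onto \<open>(0,1)\<close>, Assumption A1 gives \<open>V\<^sub>t\<^sub>+\<^sub>1\<close> a transition density in \<open>V\<^sub>t\<close> that is
continuous and positive on \<open>[0,1) \<times> (0,1)\<close>, whichever of \<open>p, q\<close> the observation follows.
Given \<open>\<tau> = m\<close>, \<open>(V\<^sub>1,\<dots>,V\<^sub>n)\<close> is therefore a Markov chain whose joint density is the product of
these transition densities, and mixing over the geometric law of \<open>\<tau>\<close> gives (1); integrating
over a box gives (2). For (3), the density of \<open>V\<^sub>t\<^sub>+\<^sub>1\<close> on the event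
\<open>{V\<^sub>1 \<le> v\<^sub>1, \<dots>, V\<^sub>t \<le> v\<^sub>t}\<close> is the \<open>(t+1)\<close>-dimensional density integrated over the box. On the
box \<open>V\<^sub>t \<le> v\<^sub>t < 1\<close>, so the transition densities are bounded for \<open>V\<^sub>t\<^sub>+\<^sub>1\<close> in compact subsets
of \<open>(0,1)\<close>, and continuity follows by dominated convergence.
\<close>

lemma nn_integral_pos_if_pos_on:
  assumes f: "f \<in> borel_measurable N" and C: "C \<in> sets N" "0 < emeasure N C"
    and pos: "\<And>x. x \<in> C \<Longrightarrow> 0 < f x"
  shows "0 < (\<integral>\<^sup>+x. f x \<partial>N)"
proof (rule ccontr)
  assume "\<not> 0 < (\<integral>\<^sup>+x. f x \<partial>N)"
  then have "AE x in N. f x = 0"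
    using nn_integral_0_iff_AE[OF f] by (simp add: not_gr_zero)
  then have "AE x in N. x \<notin> C"
    by eventually_elim (use pos in force)
  then have "emeasure N {x \<in> space N. x \<in> C} = 0"
    by (rule emeasure_eq_0_AE[where P="\<lambda>x. x \<in> C", simplified])
  moreover have "{x \<in> space N. x \<in> C} = C"
    using sets.sets_into_space[OF C(1)] by blast
  ultimately show False
    using C(2) by simp
qed

lemma emeasure_PiM_lborel_box_pos:
  assumes "finite I" and ab: "\<And>i. i \<in> I \<Longrightarrow> a i < b i"
  shows "0 < emeasure (PiM I (\<lambda>_. lborel)) (Pi\<^sub>E I (\<lambda>i. {a i<..<b i :: real}))"
proof -
  interpret product_sigma_finite "\<lambda>_::'i. lborel :: real measure"
    by (intro product_sigma_finite.intro) (rule lborel.sigma_finite_measure_axioms)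
  have "emeasure (PiM I (\<lambda>_. lborel)) (Pi\<^sub>E I (\<lambda>i. {a i<..<b i})) = (\<Prod>i\<in>I. ennreal (b i - a i))"
    using assms by (subst emeasure_PiM) (auto intro!: prod.cong simp: less_imp_le)
  also have "\<dots> = ennreal (\<Prod>i\<in>I. b i - a i)"
    using ab by (intro prod_ennreal) (simp add: less_imp_le)
  finally show ?thesis
    using assms by (simp add: prod_pos)
qed

lemma clamp_tendsto:
  fixes s :: "nat \<Rightarrow> real"
  assumes s: "s \<longlonglongrightarrow> a" and "\<alpha> < a" "a < \<beta>"
  shows "(\<lambda>n. max \<alpha> (min \<beta> (s n))) \<longlonglongrightarrow> a"
    and "eventually (\<lambda>n. max \<alpha> (min \<beta> (s n)) = s n) sequentially"
proof -
  have "(\<lambda>n. max \<alpha> (min \<beta> (s n))) \<longlonglongrightarrow> max \<alpha> (min \<beta> a)"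
    by (intro tendsto_intros s)
  then show "(\<lambda>n. max \<alpha> (min \<beta> (s n))) \<longlonglongrightarrow> a"
    using assms by simp
  have "eventually (\<lambda>n. \<alpha> < s n \<and> s n < \<beta>) sequentially"
    using order_tendstoD(1)[OF s \<open>\<alpha> < a\<close>] order_tendstoD(2)[OF s \<open>a < \<beta>\<close>] by eventually_elim simp
  then show "eventually (\<lambda>n. max \<alpha> (min \<beta> (s n)) = s n) sequentially"
    by eventually_elim simp
qed

lemma continuous_on_nn_integral_param:
  fixes K :: "real \<Rightarrow> 'b \<Rightarrow> real"
  assumes S: "open S"
    and K_meas: "\<And>x. (\<lambda>w. ennreal (K x w)) \<in> borel_measurable N"
    and K_cont: "\<And>w. continuous_on S (\<lambda>x. K x w)"
    and K_dom: "\<And>\<alpha> \<beta>. \<alpha> < \<beta> \<Longrightarrow> {\<alpha>..\<beta>} \<subseteq> S \<Longrightarrow> \<exists>g \<in> borel_measurable N.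
                  (\<integral>\<^sup>+w. g w \<partial>N) < \<infinity> \<and> (\<forall>x\<in>{\<alpha>..\<beta>}. \<forall>w. ennreal (K x w) \<le> g w)"
  shows "continuous_on S (\<lambda>x. enn2real (\<integral>\<^sup>+w. K x w \<partial>N))"
  unfolding continuous_on_sequentially comp_def
proof (intro allI ballI impI)
  fix s :: "nat \<Rightarrow> real" and a :: real
  assume a: "a \<in> S" and "(\<forall>n. s n \<in> S) \<and> s \<longlonglongrightarrow> a"
  then have s: "s \<longlonglongrightarrow> a" by simp
  obtain e where e: "0 < e" "ball a e \<subseteq> S"
    using S a open_contains_ball by blast
  define \<alpha> where "\<alpha> = a - e / 2"
  define \<beta> where "\<beta> = a + e / 2"
  have a_in: "\<alpha> < a" "a < \<beta>"
    using e by (auto simp: \<alpha>_def \<beta>_def)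
  have "{\<alpha>..\<beta>} \<subseteq> ball a e"
    using e by (auto simp: \<alpha>_def \<beta>_def dist_real_def)
  then obtain g where g: "g \<in> borel_measurable N" "(\<integral>\<^sup>+w. g w \<partial>N) < \<infinity>"
    and dom: "\<And>x w. x \<in> {\<alpha>..\<beta>} \<Longrightarrow> ennreal (K x w) \<le> g w"
    using K_dom[of \<alpha> \<beta>] e(2) a_in by fastforce
  \<comment> \<open>clamping \<open>s\<close> into \<open>[\<alpha>,\<beta>]\<close> does not change it eventually, but keeps it dominated\<close>
  define c where "c n = max \<alpha> (min \<beta> (s n))" for n
  have c: "c n \<in> {\<alpha>..\<beta>}" for n
    using a_in by (auto simp: c_def)
  have c_lim: "c \<longlonglongrightarrow> a" and ev: "eventually (\<lambda>n. c n = s n) sequentially"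
    unfolding c_def[abs_def] using clamp_tendsto[OF s a_in] by simp_all
  have cont_w: "(\<lambda>n. K (c n) w) \<longlonglongrightarrow> K a w" for w
  proof -
    have "isCont (\<lambda>x. K x w) a"
      using K_cont[of w] S a continuous_on_eq_continuous_at by blast
    then show ?thesis
      by (rule isCont_tendsto_compose[OF _ c_lim])
  qed
  have "(\<lambda>n. \<integral>\<^sup>+w. K (c n) w \<partial>N) \<longlonglongrightarrow> (\<integral>\<^sup>+w. K a w \<partial>N)"
  proof (rule nn_integral_dominated_convergence[where w=g])
    show "AE w in N. ennreal (K (c n) w) \<le> g w" for n
      using c dom by simp
    show "AE w in N. (\<lambda>n. ennreal (K (c n) w)) \<longlonglongrightarrow> ennreal (K a w)"
      using cont_w by (simp add: tendsto_ennrealI)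
  qed (use K_meas g in auto)
  then have lim: "(\<lambda>n. \<integral>\<^sup>+w. K (s n) w \<partial>N) \<longlonglongrightarrow> (\<integral>\<^sup>+w. K a w \<partial>N)"
    by (rule Lim_transform_eventually) (use ev in \<open>eventually_elim, simp\<close>)
  have "(\<integral>\<^sup>+w. K a w \<partial>N) \<le> (\<integral>\<^sup>+w. g w \<partial>N)"
    using dom[of a] a_in by (intro nn_integral_mono) simp
  then have "(\<integral>\<^sup>+w. K a w \<partial>N) \<noteq> \<infinity>"
    using g(2) by (auto simp: top_unique)
  then show "(\<lambda>n. enn2real (\<integral>\<^sup>+w. K (s n) w \<partial>N)) \<longlonglongrightarrow> enn2real (\<integral>\<^sup>+w. K a w \<partial>N)"
    using lim by (intro tendsto_enn2real) (auto simp: less_top)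
qed

subsection \<open>The law of \<open>Z/(a+Z)\<close>\<close>

text \<open>Change of variables \<open>z = a s/(1-s)\<close>, the inverse of \<open>z \<mapsto> z/(a+z)\<close>.\<close>
definition ratio_density :: "(real \<Rightarrow> real) \<Rightarrow> real \<Rightarrow> real \<Rightarrow> real" where
  "ratio_density f a s = (if 0 < s \<and> s < 1 then f (a * s / (1 - s)) * (a / (1 - s)\<^sup>2) else 0)"

lemma ratio_density_measurable[measurable]:
  assumes [measurable]: "f \<in> borel_measurable borel"
  shows "(\<lambda>s. ratio_density f a s) \<in> borel_measurable borel"
  unfolding ratio_density_def by measurable

lemma ratio_density_eq_0:
  assumes "\<not> (0 < s \<and> s < 1)"
  shows "ratio_density f a s = 0"
  unfolding ratio_density_def by (rule if_not_P[OF assms])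

lemma emeasure_density_ratio_interval:
  fixes f :: "real \<Rightarrow> real"
  assumes a: "0 < a" and [measurable]: "f \<in> borel_measurable borel"
    and f0: "f 0 = 0" and ys: "0 \<le> y" "y \<le> s" "s < 1"
  shows "emeasure (density lborel f) {a * y / (1 - y) .. a * s / (1 - s)}
       = emeasure (density lborel (ratio_density f a)) {y..s}"
proof -
  define g where "g x = a * x / (1 - x)" for x
  have "emeasure (density lborel f) {g y..g s} = (\<integral>\<^sup>+x. ennreal (f x * indicator {g y..g s} x) \<partial>lborel)"
    by (simp add: emeasure_density nn_integral_set_ennreal)
  also have "\<dots> = (\<integral>\<^sup>+x. ennreal (f (g x) * (a / (1 - x)\<^sup>2) * indicator {y..s} x) \<partial>lborel)"
  proof (rule nn_integral_substitution)
    show "set_borel_measurable borel {g y..g s} f"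
      unfolding set_borel_measurable_def by measurable
    show "(g has_real_derivative a / (1 - x)\<^sup>2) (at x)" if "x \<in> {y..s}" for x
      using that ys unfolding g_def
      by (auto intro!: derivative_eq_intros simp: power2_eq_square field_simps)
    show "continuous_on {y..s} (\<lambda>x. a / (1 - x)\<^sup>2)"
      using ys by (auto intro!: continuous_intros)
  qed (use a ys in auto)
  also have "\<dots> = (\<integral>\<^sup>+x. ennreal (ratio_density f a x) * indicator {y..s} x \<partial>lborel)"
  proof (intro nn_integral_cong)
    fix x :: real
    have "f (g x) * (a / (1 - x)\<^sup>2) = ratio_density f a x" if "y \<le> x" "x \<le> s"
      using that ys f0 by (cases "x = 0") (auto simp: ratio_density_def g_def)
    then show "ennreal (f (g x) * (a / (1 - x)\<^sup>2) * indicator {y..s} x)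
        = ennreal (ratio_density f a x) * indicator {y..s} x"
      by (auto split: split_indicator)
  qed
  also have "\<dots> = emeasure (density lborel (ratio_density f a)) {y..s}"
    by (simp add: emeasure_density)
  finally show ?thesis
    by (simp add: g_def)
qed

lemma ratio_map_inverse:
  fixes a t :: real
  assumes "0 < a" "0 \<le> t"
  shows "a * (t / (a + t)) / (1 - t / (a + t)) = t" and "t / (a + t) < 1"
proof -
  have "0 < a + t" "1 - t / (a + t) = a / (a + t)"
    using assms by (auto simp: field_simps)
  then show "a * (t / (a + t)) / (1 - t / (a + t)) = t" "t / (a + t) < 1"
    using assms by simp_all
qed

lemma le_ratio_map_iff:
  fixes a s t :: real
  assumes "0 < a" "0 \<le> t" "s < 1"
  shows "s \<le> t / (a + t) \<longleftrightarrow> a * s / (1 - s) \<le> t"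
proof -
  have "s \<le> t / (a + t) \<longleftrightarrow> a * s \<le> t * (1 - s)"
    using assms by (simp add: field_simps)
  also have "\<dots> \<longleftrightarrow> a * s / (1 - s) \<le> t"
    using assms by (simp add: field_simps)
  finally show ?thesis .
qed

lemma less_ratio_map_iff:
  fixes a x z :: real
  assumes "0 < a" "0 < z" "x < 1"
  shows "x < z / (a + z) \<longleftrightarrow> a * max x 0 / (1 - max x 0) < z"
proof (cases "x < 0")
  case True
  have "0 < z / (a + z)"
    using assms by simp
  then have "x < z / (a + z)"
    using True by linarith
  then show ?thesis
    using True assms by simp
next
  case False
  have "x < z / (a + z) \<longleftrightarrow> a * x < z * (1 - x)"
    using assms by (simp add: pos_less_divide_eq algebra_simps)
  also have "\<dots> \<longleftrightarrow> a * x / (1 - x) < z"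
    using assms by (simp add: pos_divide_less_eq)
  finally show ?thesis
    using False by simp
qed

lemma emeasure_density_ratio_Ici:
  fixes f :: "real \<Rightarrow> real"
  assumes a: "0 < a" and f[measurable]: "f \<in> borel_measurable borel"
    and f0: "f 0 = 0" and y: "0 \<le> y" "y < 1"
  shows "emeasure (density lborel f) {a * y / (1 - y)..} = emeasure (density lborel (ratio_density f a)) {y..<1}"
proof -
  define c where "c k = a * y / (1 - y) + real k" for k :: nat
  define u where "u k = c k / (a + c k)" for k
  have c: "0 \<le> c k" for k
    using a y by (simp add: c_def)
  have u: "a * u k / (1 - u k) = c k" "u k < 1" "y \<le> u k" for k
    using ratio_map_inverse[OF a c] le_ratio_map_iff[OF a c y(2)] by (simp_all add: u_def c_def)
  have c_Un: "(\<Union>k. {a * y / (1 - y)..c k}) = {a * y / (1 - y)..}"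
    by (auto simp: c_def) (metis add.commute diff_le_eq real_arch_simple)
  have u_Un: "(\<Union>k. {y..u k}) = {y..<1}"
  proof (intro equalityI subsetI)
    fix s assume s: "s \<in> {y..<1}"
    obtain k :: nat where "a * s / (1 - s) - a * y / (1 - y) \<le> real k"
      using real_arch_simple by blast
    then have "s \<le> u k"
      using le_ratio_map_iff[OF a c] s by (simp add: u_def c_def)
    then show "s \<in> (\<Union>k. {y..u k})"
      using s by auto
  next
    fix s assume "s \<in> (\<Union>k. {y..u k})"
    then obtain k where "y \<le> s" "s \<le> u k"
      by auto
    then show "s \<in> {y..<1}"
      using u(2)[of k] by simp
  qed
  have "u k \<le> u (Suc k)" for k
  proof -
    have "a * u k / (1 - u k) \<le> c (Suc k)"
      using u(1)[of k] by (simp add: c_def)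
    then have "u k \<le> c (Suc k) / (a + c (Suc k))"
      using le_ratio_map_iff[OF a c u(2)[of k]] by blast
    then show ?thesis
      unfolding u_def[of "Suc k"] .
  qed
  then have u_mono: "incseq (\<lambda>k. {y..u k})"
    by (intro incseq_SucI) auto
  have "emeasure (density lborel f) {a * y / (1 - y)..} = (SUP k. emeasure (density lborel f) {a * y / (1 - y)..c k})"
    unfolding c_Un[symmetric] by (rule SUP_emeasure_incseq[symmetric]) (auto simp: incseq_def c_def)
  also have "\<dots> = (SUP k. emeasure (density lborel (ratio_density f a)) {y..u k})"
    using emeasure_density_ratio_interval[OF a f f0 y(1) u(3) u(2)] u(1) by simp
  also have "\<dots> = emeasure (density lborel (ratio_density f a)) {y..<1}"
    unfolding u_Un[symmetric] by (rule SUP_emeasure_incseq) (use u_mono in auto)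
  finally show ?thesis .
qed

lemma nn_integral_ratio_density_tail:
  fixes f :: "real \<Rightarrow> real"
  assumes a: "0 < a" and [measurable]: "f \<in> borel_measurable borel"
    and f0: "\<And>z. z \<le> 0 \<Longrightarrow> f z = 0" and y: "0 \<le> y" "y < 1"
  shows "(\<integral>\<^sup>+z. ennreal (f z) * indicator {a * y / (1 - y)<..} z \<partial>lborel)
       = (\<integral>\<^sup>+s. ennreal (ratio_density f a s) * indicator {y<..} s \<partial>lborel)"
proof -
  have "(\<integral>\<^sup>+z. ennreal (f z) * indicator {a * y / (1 - y)<..} z \<partial>lborel)
      = emeasure (density lborel f) {a * y / (1 - y)..}"
    by (simp add: emeasure_density, intro nn_integral_cong_AE)
      (use AE_lborel_singleton[of "a * y / (1 - y)"] in \<open>auto split: split_indicator\<close>)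
  also have "\<dots> = emeasure (density lborel (ratio_density f a)) {y..<1}"
    using f0 by (intro emeasure_density_ratio_Ici[OF a _ _ y]) simp_all
  also have "\<dots> = (\<integral>\<^sup>+s. ennreal (ratio_density f a s) * indicator {y<..} s \<partial>lborel)"
    by (simp add: emeasure_density, intro nn_integral_cong_AE)
      (use AE_lborel_singleton[of y] in \<open>auto simp: ratio_density_eq_0 split: split_indicator\<close>)
  finally show ?thesis .
qed

lemma distr_ratio_density:
  fixes f :: "real \<Rightarrow> real"
  assumes a: "0 < a" and [measurable]: "f \<in> borel_measurable borel"
    and f0: "\<And>z. z \<le> 0 \<Longrightarrow> f z = 0" and f_int: "(\<integral>\<^sup>+z. ennreal (f z) \<partial>lborel) = 1"
  shows "distr (density lborel f) lborel (\<lambda>z. z / (a + z)) = density lborel (ratio_density f a)"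
proof (rule measure_eqI_lessThan)
  fix x :: real
  have lhs: "emeasure (distr (density lborel f) lborel (\<lambda>z. z / (a + z))) {x<..}
      = (\<integral>\<^sup>+z. ennreal (f z) * indicator {z. x < z / (a + z)} z \<partial>lborel)"
    by (subst emeasure_distr) (auto simp: emeasure_density nn_integral_set_ennreal vimage_def
        intro!: nn_integral_cong split: split_indicator)
  have rhs: "emeasure (density lborel (ratio_density f a)) {x<..}
      = (\<integral>\<^sup>+s. ennreal (ratio_density f a s) * indicator {x<..} s \<partial>lborel)"
    by (simp add: emeasure_density)
  have "(\<integral>\<^sup>+z. ennreal (f z) * indicator {z. x < z / (a + z)} z \<partial>lborel) \<le> (\<integral>\<^sup>+z. ennreal (f z) \<partial>lborel)"
    by (intro nn_integral_mono) (auto split: split_indicator)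
  then show "emeasure (distr (density lborel f) lborel (\<lambda>z. z / (a + z))) {x<..} < \<infinity>"
    unfolding lhs f_int by (simp add: le_less_trans)
  show "emeasure (distr (density lborel f) lborel (\<lambda>z. z / (a + z))) {x<..}
      = emeasure (density lborel (ratio_density f a)) {x<..}"
  proof (cases "x < 1")
    case True
    have "(\<integral>\<^sup>+z. ennreal (f z) * indicator {z. x < z / (a + z)} z \<partial>lborel)
        = (\<integral>\<^sup>+z. ennreal (f z) * indicator {a * max x 0 / (1 - max x 0)<..} z \<partial>lborel)"
    proof (intro nn_integral_cong)
      fix z :: real
      show "ennreal (f z) * indicator {z. x < z / (a + z)} z
          = ennreal (f z) * indicator {a * max x 0 / (1 - max x 0)<..} z"
        using f0[of z] less_ratio_map_iff[OF a _ True, of z] by (cases "0 < z") (auto split: split_indicator)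
    qed
    also have "\<dots> = (\<integral>\<^sup>+s. ennreal (ratio_density f a s) * indicator {max x 0<..} s \<partial>lborel)"
      using True by (intro nn_integral_ratio_density_tail[OF a _ f0]) simp_all
    also have "\<dots> = (\<integral>\<^sup>+s. ennreal (ratio_density f a s) * indicator {x<..} s \<partial>lborel)"
      by (intro nn_integral_cong) (auto simp: ratio_density_eq_0 split: split_indicator)
    finally show ?thesis
      unfolding lhs rhs .
  next
    case False
    have "f z = 0" if "x < z / (a + z)" for z
    proof (cases "0 < z")
      case True
      then have "z / (a + z) < 1"
        using a by simp
      then show ?thesis
        using False that by linarith
    qed (use f0 in auto)
    then have "(\<integral>\<^sup>+z. ennreal (f z) * indicator {z. x < z / (a + z)} z \<partial>lborel) = (\<integral>\<^sup>+z. 0 \<partial>(lborel :: real measure))"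
      by (intro nn_integral_cong) (simp split: split_indicator)
    moreover have "(\<integral>\<^sup>+s. ennreal (ratio_density f a s) * indicator {x<..} s \<partial>lborel) = (\<integral>\<^sup>+s. 0 \<partial>(lborel :: real measure))"
      using False by (intro nn_integral_cong) (auto simp: ratio_density_eq_0 split: split_indicator)
    ultimately show ?thesis
      unfolding lhs rhs by simp
  qed
qed simp_all

subsection \<open>Transition densities of the recursion\<close>

locale lr_setting =
  fixes \<theta> :: real and p q fp fq :: "real \<Rightarrow> real"
  assumes \<theta>: "0 < \<theta>" "\<theta> < 1"
    and p_meas[measurable]: "p \<in> borel_measurable borel"
    and q_meas[measurable]: "q \<in> borel_measurable borel"
    and p_int: "(\<integral>\<^sup>+x. ennreal (p x) \<partial>lborel) = 1" and q_int: "(\<integral>\<^sup>+x. ennreal (q x) \<partial>lborel) = 1"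
    and fp: "distributed (density lborel (\<lambda>x. ennreal (p x))) lborel (LR p q) (\<lambda>y. ennreal (fp y))"
      "continuous_on {0<..} fp" "\<And>y. 0 < y \<Longrightarrow> 0 < fp y" "\<And>y. y \<le> 0 \<Longrightarrow> fp y = 0"
    and fq: "distributed (density lborel (\<lambda>x. ennreal (q x))) lborel (LR p q) (\<lambda>y. ennreal (fq y))"
      "continuous_on {0<..} fq" "\<And>y. 0 < y \<Longrightarrow> 0 < fq y" "\<And>y. y \<le> 0 \<Longrightarrow> fq y = 0"
begin

text \<open>The flag \<open>b\<close> is \<open>True\<close> for an observation before the change (density \<open>p\<close>) and \<open>False\<close>
  after it (density \<open>q\<close>).\<close>

definition obs_law :: "bool \<Rightarrow> real measure" where
  "obs_law b = density lborel (\<lambda>x. if b then p x else q x)"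

definition lr_dens :: "bool \<Rightarrow> real \<Rightarrow> real" where
  "lr_dens b = (if b then fp else fq)"

definition odds :: "real \<Rightarrow> real" where
  "odds w = (1 - \<theta>) * (1 - w) / (\<theta> + (1 - \<theta>) * w)"

definition trans_dens :: "bool \<Rightarrow> real \<Rightarrow> real \<Rightarrow> real" where
  "trans_dens b w x = (if 0 \<le> w \<and> w < 1 then ratio_density (lr_dens b) (odds w) x else 0)"

lemma lr_dens_pos: "0 < y \<Longrightarrow> 0 < lr_dens b y"
  using fp fq by (simp add: lr_dens_def)

lemma lr_dens_eq_0: "y \<le> 0 \<Longrightarrow> lr_dens b y = 0"
  using fp fq by (simp add: lr_dens_def)

lemma lr_dens_nonneg: "0 \<le> lr_dens b y"
  using lr_dens_pos[of y b] lr_dens_eq_0[of y b] by (cases "0 < y") auto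

lemma continuous_on_lr_dens: "continuous_on {0<..} (lr_dens b)"
  using fp fq by (simp add: lr_dens_def)

lemma sets_obs_law[simp]: "sets (obs_law b) = sets borel"
  by (simp add: obs_law_def)

lemma prob_space_obs_law: "prob_space (obs_law b)"
  using p_int q_int by (intro prob_spaceI) (cases b, simp_all add: obs_law_def emeasure_density)

lemma measurable_obs_law[simp]: "measurable (obs_law b) N = measurable borel N"
  by (rule measurable_cong_sets) simp_all

lemma distributed_LR_obs_law: "distributed (obs_law b) lborel (LR p q) (\<lambda>y. ennreal (lr_dens b y))"
  using fp fq by (cases b) (simp_all add: lr_dens_def obs_law_def)

lemma lr_dens_measurable[measurable]: "lr_dens b \<in> borel_measurable borel"
proof -
  have "(\<lambda>y. enn2real (ennreal (lr_dens b y))) \<in> borel_measurable borel"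
    using distributed_borel_measurable[OF distributed_LR_obs_law] by simp
  then show ?thesis
    by (simp add: lr_dens_nonneg)
qed

lemma LR_measurable[measurable]: "LR p q \<in> borel_measurable borel"
  unfolding LR_def by measurable

lemma nn_integral_lr_dens: "(\<integral>\<^sup>+y. ennreal (lr_dens b y) \<partial>lborel) = 1"
proof -
  interpret prob_space "obs_law b"
    by (rule prob_space_obs_law)
  have "(\<integral>\<^sup>+y. ennreal (lr_dens b y) \<partial>lborel) = emeasure (distr (obs_law b) lborel (LR p q)) UNIV"
    using distributed_distr_eq_density[OF distributed_LR_obs_law] by (simp add: emeasure_density)
  also have "\<dots> = 1"
    by (subst emeasure_distr) (simp_all add: emeasure_space_1[simplified])
  finally show ?thesis .
qed

lemma odds_pos: "0 \<le> w \<Longrightarrow> w < 1 \<Longrightarrow> 0 < odds w"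
  using \<theta> by (simp add: odds_def add_pos_nonneg)

lemma distr_obs_law_step:
  assumes "0 \<le> w" "w < 1"
  shows "distr (obs_law b) lborel (\<lambda>y. LR p q y / (odds w + LR p q y)) = density lborel (trans_dens b w)"
proof -
  have "distr (obs_law b) lborel (\<lambda>y. LR p q y / (odds w + LR p q y))
      = distr (distr (obs_law b) lborel (LR p q)) lborel (\<lambda>z. z / (odds w + z))"
    by (subst distr_distr) (auto simp: comp_def)
  also have "\<dots> = density lborel (ratio_density (lr_dens b) (odds w))"
    unfolding distributed_distr_eq_density[OF distributed_LR_obs_law]
    using odds_pos[OF assms] lr_dens_eq_0 nn_integral_lr_dens by (intro distr_ratio_density) auto
  finally show ?thesis
    using assms by (simp add: trans_dens_def)
qed

lemma trans_dens_eq_0: "\<not> (0 < x \<and> x < 1) \<Longrightarrow> trans_dens b w x = 0"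
  by (simp add: trans_dens_def ratio_density_eq_0)

lemma trans_dens_pos:
  assumes "0 \<le> w" "w < 1" "0 < x" "x < 1"
  shows "0 < trans_dens b w x"
  using assms odds_pos[of w] lr_dens_pos[of "odds w * x / (1 - x)" b]
  by (simp add: trans_dens_def ratio_density_def)

lemma trans_dens_nonneg: "0 \<le> trans_dens b w x"
  using trans_dens_pos[of w x b] trans_dens_eq_0[of x b w]
  by (cases "0 \<le> w \<and> w < 1 \<and> 0 < x \<and> x < 1") (auto simp: trans_dens_def)

lemma trans_dens_measurable[measurable (raw)]:
  assumes [measurable]: "f \<in> borel_measurable M" "g \<in> borel_measurable M"
  shows "(\<lambda>z. trans_dens b (f z) (g z)) \<in> borel_measurable M"
  unfolding trans_dens_def ratio_density_def odds_def by measurable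

lemma continuous_on_trans_dens:
  assumes w: "continuous_on S w" and x: "continuous_on S x"
    and range: "\<And>v. v \<in> S \<Longrightarrow> 0 \<le> w v \<and> w v < 1 \<and> 0 < x v \<and> x v < 1"
  shows "continuous_on S (\<lambda>v. trans_dens b (w v) (x v))"
proof -
  have nz: "\<theta> + (1 - \<theta>) * w v \<noteq> 0" "1 - x v \<noteq> 0" if "v \<in> S" for v
  proof -
    have "0 < \<theta> + (1 - \<theta>) * w v"
      using \<theta> range[OF that] by (simp add: add_pos_nonneg)
    then show "\<theta> + (1 - \<theta>) * w v \<noteq> 0" "1 - x v \<noteq> 0"
      using range[OF that] by auto
  qed
  then have odds_cont: "continuous_on S (\<lambda>v. odds (w v))" and arg_cont: "continuous_on S (\<lambda>v. odds (w v) * x v / (1 - x v))"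
    unfolding odds_def by (auto intro!: continuous_intros w x)
  have "(\<lambda>v. odds (w v) * x v / (1 - x v)) ` S \<subseteq> {0<..}"
    using range odds_pos by auto
  then have "continuous_on S (\<lambda>v. lr_dens b (odds (w v) * x v / (1 - x v)))"
    by (rule continuous_on_compose2[OF continuous_on_lr_dens arg_cont])
  then have "continuous_on S (\<lambda>v. lr_dens b (odds (w v) * x v / (1 - x v)) * (odds (w v) / (1 - x v)\<^sup>2))"
    using nz by (auto intro!: continuous_intros odds_cont x)
  then show ?thesis
    by (rule continuous_on_eq) (use range in \<open>simp add: trans_dens_def ratio_density_def\<close>)
qed

lemma continuous_on_trans_dens_right: "continuous_on {0<..<1} (trans_dens b w)"
proof (cases "0 \<le> w \<and> w < 1")
  case True
  have "continuous_on {0<..<1} (\<lambda>x. trans_dens b ((\<lambda>_. w) x) ((\<lambda>x. x) x))"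
    by (rule continuous_on_trans_dens) (use True in \<open>auto intro: continuous_on_id\<close>)
  then show ?thesis
    by simp
next
  case False
  then have "trans_dens b w = (\<lambda>_. 0)"
    by (auto simp: trans_dens_def fun_eq_iff)
  then show ?thesis
    by simp
qed

lemma trans_dens_bounded:
  assumes "0 \<le> c" "c < 1" "0 < \<alpha>" "\<beta> < 1"
  shows "\<exists>C. \<forall>w\<in>{0..c}. \<forall>x\<in>{\<alpha>..\<beta>}. trans_dens b w x \<le> C"
proof -
  have "continuous_on ({0..c} \<times> {\<alpha>..\<beta>}) (\<lambda>z. trans_dens b (fst z) (snd z))"
    using assms by (intro continuous_on_trans_dens continuous_on_fst continuous_on_snd continuous_on_id) auto
  then have "compact ((\<lambda>z. trans_dens b (fst z) (snd z)) ` ({0..c} \<times> {\<alpha>..\<beta>}))"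
    by (intro compact_continuous_image compact_Times compact_Icc)
  then have "bounded ((\<lambda>z. trans_dens b (fst z) (snd z)) ` ({0..c} \<times> {\<alpha>..\<beta>}))"
    by (rule compact_imp_bounded)
  then obtain C where C: "\<forall>y \<in> (\<lambda>z. trans_dens b (fst z) (snd z)) ` ({0..c} \<times> {\<alpha>..\<beta>}). norm y \<le> C"
    unfolding bounded_iff by blast
  show ?thesis
  proof (intro exI ballI)
    fix w x assume "w \<in> {0..c}" "x \<in> {\<alpha>..\<beta>}"
    then have "trans_dens b w x \<in> (\<lambda>z. trans_dens b (fst z) (snd z)) ` ({0..c} \<times> {\<alpha>..\<beta>})"
      by force
    then have "\<bar>trans_dens b w x\<bar> \<le> C"
      using C by force
    then show "trans_dens b w x \<le> C"
      by linarith
  qed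
qed

end

context lr_setting
begin

text \<open>\<open>prev v i\<close> is the value preceding \<open>v i\<close> in the path, with \<open>V\<^sub>0 = 0\<close> before \<open>v 1\<close>.\<close>

definition prev :: "(nat \<Rightarrow> real) \<Rightarrow> nat \<Rightarrow> real" where
  "prev v i = (if i = Suc 0 then 0 else v (i - 1))"

definition path_dens :: "nat \<Rightarrow> nat \<Rightarrow> (nat \<Rightarrow> real) \<Rightarrow> real" where
  "path_dens n m v = (\<Prod>i\<in>{1..n}. trans_dens (i \<le> m) (prev v i) (v i))"

definition Vfun :: "nat \<Rightarrow> (nat \<Rightarrow> real) \<Rightarrow> real" where
  "Vfun i x = Vseq \<theta> p q (\<lambda>j y. y j) i x"

definition Vvec :: "nat \<Rightarrow> (nat \<Rightarrow> real) \<Rightarrow> (nat \<Rightarrow> real)" where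
  "Vvec n x = (\<lambda>i\<in>{1..n}. Vfun i x)"

lemma Vfun_0[simp]: "Vfun 0 x = 0"
  by (simp add: Vfun_def)

lemma Vfun_Suc: "Vfun (Suc t) x = LR p q (x (Suc t)) / (odds (Vfun t x) + LR p q (x (Suc t)))"
  by (simp add: Vfun_def odds_def)

lemma Vseq_eq_Vfun: "Vseq \<theta> p q X i \<omega> = Vfun i (\<lambda>j. X j \<omega>)"
  by (induction i) (simp_all add: Vfun_Suc odds_def)

lemma Vfun_cong: "(\<And>j. j \<in> {1..i} \<Longrightarrow> x j = y j) \<Longrightarrow> Vfun i x = Vfun i y"
proof (induction i)
  case (Suc i)
  then show ?case
    by (simp add: Vfun_Suc)
qed simp

lemma Vseq_measurable:
  "(\<And>j. j \<in> {1..i} \<Longrightarrow> X j \<in> borel_measurable N) \<Longrightarrow> Vseq \<theta> p q X i \<in> borel_measurable N"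
proof (induction i)
  case (Suc i)
  then have [measurable]: "Vseq \<theta> p q X i \<in> borel_measurable N" "X (Suc i) \<in> borel_measurable N"
    by auto
  show ?case
    by simp measurable
next
  case 0
  have "Vseq \<theta> p q X 0 = (\<lambda>_. 0)"
    by (simp add: fun_eq_iff)
  then show ?case
    by simp
qed

lemma Vfun_measurable[measurable]:
  "{1..i} \<subseteq> I \<Longrightarrow> Vfun i \<in> borel_measurable (PiM I (\<lambda>_. lborel))"
  unfolding Vfun_def by (rule Vseq_measurable) auto

lemma Vvec_measurable[measurable]: "Vvec n \<in> measurable (PiM {1..n} (\<lambda>_. lborel)) (PiM {1..n} (\<lambda>_. lborel))"
  unfolding Vvec_def by (rule measurable_restrict) simp

lemma prev_Suc_measurable[measurable]:
  "(\<lambda>w. prev w (Suc n)) \<in> borel_measurable (PiM {1..n} (\<lambda>_. lborel))"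
  by (cases n) (simp_all add: prev_def)

lemma path_dens_measurable[measurable]:
  assumes "{1..n} \<subseteq> I"
  shows "path_dens n m \<in> borel_measurable (PiM I (\<lambda>_. lborel))"
proof -
  have "(\<lambda>v. trans_dens (i \<le> m) (prev v i) (v i)) \<in> borel_measurable (PiM I (\<lambda>_. lborel))"
    if "i \<in> {1..n}" for i
  proof (cases "i = Suc 0")
    case False
    then have "i - 1 \<in> {1..n}"
      using that by auto
    then have "i \<in> I" "i - 1 \<in> I"
      using that assms by auto
    then show ?thesis
      using False by (simp add: prev_def)
  qed (use that assms in \<open>auto simp: prev_def\<close>)
  then show ?thesis
    unfolding path_dens_def by (rule borel_measurable_prod)
qed

lemma path_dens_nonneg: "0 \<le> path_dens n m v"
  unfolding path_dens_def by (intro prod_nonneg) (simp add: trans_dens_nonneg)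

lemma path_dens_after_horizon: "n \<le> m \<Longrightarrow> path_dens n m v = path_dens n n v"
  unfolding path_dens_def by (intro prod.cong) auto

lemma path_dens_upd:
  "path_dens (Suc n) m (w(Suc n := x)) = trans_dens (Suc n \<le> m) (prev w (Suc n)) x * path_dens n m w"
proof -
  have "(\<Prod>i\<in>{1..n}. trans_dens (i \<le> m) (prev (w(Suc n := x)) i) ((w(Suc n := x)) i)) = path_dens n m w"
    unfolding path_dens_def by (rule prod.cong) (auto simp: prev_def)
  moreover have "{1..Suc n} = insert (Suc n) {1..n}"
    by auto
  ultimately show ?thesis
    by (simp add: path_dens_def prev_def)
qed

lemma path_dens_eq_0_if_prev_out:
  assumes "\<not> (0 \<le> prev w (Suc n) \<and> prev w (Suc n) < 1)"
  shows "path_dens n m w = 0"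
proof -
  have "n \<noteq> 0"
  proof
    assume "n = 0"
    with assms show False
      by (simp add: prev_def)
  qed
  then have "n \<in> {1..n}" "prev w (Suc n) = w n"
    by (auto simp: prev_def)
  moreover have "trans_dens (n \<le> m) (prev w n) (w n) = 0"
    using assms calculation by (auto simp: trans_dens_eq_0)
  ultimately show ?thesis
    unfolding path_dens_def by (meson finite_atLeastAtMost prod_zero)
qed

lemma Vvec_upd:
  "Vvec (Suc n) (x(Suc n := y)) =
     (Vvec n x)(Suc n := LR p q y / (odds (prev (Vvec n x) (Suc n)) + LR p q y))"
proof
  fix i
  have same: "Vfun i (x(Suc n := y)) = Vfun i x" if "i \<le> n" for i
    by (rule Vfun_cong) (use that in auto)
  have "prev (Vvec n x) (Suc n) = Vfun n x"
    by (cases n) (simp_all add: prev_def Vvec_def)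
  then show "Vvec (Suc n) (x(Suc n := y)) i =
      ((Vvec n x)(Suc n := LR p q y / (odds (prev (Vvec n x) (Suc n)) + LR p q y))) i"
    using same[of i] same[of n] by (auto simp: Vvec_def Vfun_Suc)
qed

lemma nn_integral_obs_law_step:
  assumes \<phi>[measurable]: "\<phi> \<in> borel_measurable (PiM {1..Suc n} (\<lambda>_. lborel))"
    and w: "w \<in> space (PiM {1..n} (\<lambda>_. lborel))"
  shows "(\<integral>\<^sup>+y. \<phi> (w(Suc n := LR p q y / (odds (prev w (Suc n)) + LR p q y))) \<partial>obs_law (Suc n \<le> m))
           * ennreal (path_dens n m w)
       = (\<integral>\<^sup>+x. \<phi> (w(Suc n := x)) * ennreal (path_dens (Suc n) m (w(Suc n := x))) \<partial>lborel)"
proof (cases "0 \<le> prev w (Suc n) \<and> prev w (Suc n) < 1")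
  case True
  let ?k = "trans_dens (Suc n \<le> m) (prev w (Suc n))"
  have "(\<lambda>x. w(Suc n := x)) \<in> measurable lborel (PiM {1..Suc n} (\<lambda>_. lborel))"
    using measurable_component_update[OF w, of "Suc n"] by (simp add: atLeastAtMostSuc_conv)
  from measurable_compose[OF this \<phi>]
  have [measurable]: "(\<lambda>x. \<phi> (w(Suc n := x))) \<in> borel_measurable lborel" .
  have "(\<integral>\<^sup>+y. \<phi> (w(Suc n := LR p q y / (odds (prev w (Suc n)) + LR p q y))) \<partial>obs_law (Suc n \<le> m))
      = (\<integral>\<^sup>+x. \<phi> (w(Suc n := x)) \<partial>density lborel ?k)"
    using True by (subst distr_obs_law_step[symmetric]) (auto simp: nn_integral_distr)
  also have "\<dots> = (\<integral>\<^sup>+x. ennreal (?k x) * \<phi> (w(Suc n := x)) \<partial>lborel)"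
    by (rule nn_integral_density) simp_all
  finally have "(\<integral>\<^sup>+y. \<phi> (w(Suc n := LR p q y / (odds (prev w (Suc n)) + LR p q y))) \<partial>obs_law (Suc n \<le> m))
        * ennreal (path_dens n m w)
      = (\<integral>\<^sup>+x. ennreal (?k x) * \<phi> (w(Suc n := x)) * ennreal (path_dens n m w) \<partial>lborel)"
    by (simp add: nn_integral_multc)
  also have "\<dots> = (\<integral>\<^sup>+x. \<phi> (w(Suc n := x)) * ennreal (path_dens (Suc n) m (w(Suc n := x))) \<partial>lborel)"
    by (intro nn_integral_cong)
      (simp add: path_dens_upd ennreal_mult trans_dens_nonneg path_dens_nonneg mult_ac)
  finally show ?thesis .
next
  case False
  then show ?thesis
    by (simp add: path_dens_eq_0_if_prev_out path_dens_upd)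
qed

lemma sets_PiM_obs_law[measurable_cong]: "sets (PiM I (\<lambda>i. obs_law (i \<le> m))) = sets (PiM I (\<lambda>_. lborel))"
  by (intro sets_PiM_cong) simp_all

lemma product_sigma_finite_obs_law: "product_sigma_finite (\<lambda>i. obs_law (i \<le> m))"
  by (intro product_sigma_finite.intro prob_space_imp_sigma_finite prob_space_obs_law)

lemma product_sigma_finite_lborel: "product_sigma_finite (\<lambda>_::nat. lborel :: real measure)"
  by (intro product_sigma_finite.intro) (rule lborel.sigma_finite_measure_axioms)

lemma Vvec_step_measurable[measurable]:
  "(\<lambda>(w, y). w(Suc n := LR p q y / (odds (prev w (Suc n)) + LR p q y)))
     \<in> measurable (PiM {1..n} (\<lambda>_. lborel) \<Otimes>\<^sub>M obs_law b) (PiM {1..Suc n} (\<lambda>_. lborel))"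
proof -
  have pair_obs: "measurable (PiM {1..n} (\<lambda>_. lborel) \<Otimes>\<^sub>M obs_law b) N
      = measurable (PiM {1..n} (\<lambda>_. lborel) \<Otimes>\<^sub>M lborel) N" for N :: "(nat \<Rightarrow> real) measure"
    by (intro measurable_cong_sets sets_pair_measure_cong) simp_all
  have upd: "(\<lambda>z. (fst z)(Suc n := LR p q (snd z) / (odds (prev (fst z) (Suc n)) + LR p q (snd z))))
      \<in> measurable (PiM {1..n} (\<lambda>_. lborel) \<Otimes>\<^sub>M lborel) (PiM {1..Suc n} (\<lambda>_. lborel))"
  proof (rule measurable_fun_upd[where J="{1..n}"])
    show "{1..Suc n} = {1..n} \<union> {Suc n}"
      by auto
    have [measurable]: "(\<lambda>z. prev (fst z) (Suc n)) \<in> borel_measurable (PiM {1..n} (\<lambda>_. lborel) \<Otimes>\<^sub>M lborel)"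
      using measurable_compose[OF measurable_fst prev_Suc_measurable] .
    show "(\<lambda>z. LR p q (snd z) / (odds (prev (fst z) (Suc n)) + LR p q (snd z)))
        \<in> measurable (PiM {1..n} (\<lambda>_. lborel) \<Otimes>\<^sub>M lborel) lborel"
      unfolding odds_def by measurable
  qed measurable
  then show ?thesis
    unfolding case_prod_beta' pair_obs .
qed

lemma nn_integral_Vvec_obs_law:
  assumes "\<phi> \<in> borel_measurable (PiM {1..n} (\<lambda>_. lborel))"
  shows "(\<integral>\<^sup>+x. \<phi> (Vvec n x) \<partial>PiM {1..n} (\<lambda>i. obs_law (i \<le> m)))
       = (\<integral>\<^sup>+v. \<phi> v * ennreal (path_dens n m v) \<partial>PiM {1..n} (\<lambda>_. lborel))"
  using assms
proof (induction n arbitrary: \<phi>)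
  case 0
  have "Vvec 0 x = (\<lambda>_. undefined)" for x
    by (simp add: Vvec_def fun_eq_iff)
  then show ?case
    by (simp add: PiM_empty path_dens_def nn_integral_count_space_finite)
next
  case (Suc n)
  note [measurable] = Suc.prems
  interpret R: product_sigma_finite "\<lambda>i. obs_law (i \<le> m)"
    by (rule product_sigma_finite_obs_law)
  interpret L: product_sigma_finite "\<lambda>_::nat. lborel :: real measure"
    by (rule product_sigma_finite_lborel)
  have IN: "{1..Suc n} = insert (Suc n) {1..n}"
    by auto
  define \<psi> where "\<psi> w = (\<integral>\<^sup>+y. \<phi> (w(Suc n := LR p q y / (odds (prev w (Suc n)) + LR p q y)))
      \<partial>obs_law (Suc n \<le> m))" for w
  have "\<psi> \<in> borel_measurable (PiM {1..n} (\<lambda>_. lborel))"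
    unfolding \<psi>_def
    by (rule sigma_finite_measure.borel_measurable_nn_integral[OF prob_space_imp_sigma_finite[OF prob_space_obs_law]])
      measurable
  then have "(\<integral>\<^sup>+x. \<psi> (Vvec n x) \<partial>PiM {1..n} (\<lambda>i. obs_law (i \<le> m)))
      = (\<integral>\<^sup>+w. \<psi> w * ennreal (path_dens n m w) \<partial>PiM {1..n} (\<lambda>_. lborel))"
    by (rule Suc.IH)
  moreover have "(\<integral>\<^sup>+x. \<phi> (Vvec (Suc n) x) \<partial>PiM {1..Suc n} (\<lambda>i. obs_law (i \<le> m)))
      = (\<integral>\<^sup>+x. \<psi> (Vvec n x) \<partial>PiM {1..n} (\<lambda>i. obs_law (i \<le> m)))"
  proof -
    have "(\<lambda>x. \<phi> (Vvec (Suc n) x)) \<in> borel_measurable (PiM (insert (Suc n) {1..n}) (\<lambda>_. lborel))"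
      unfolding IN[symmetric] by measurable
    then show ?thesis
      unfolding IN by (subst R.product_nn_integral_insert) (auto simp: Vvec_upd \<psi>_def)
  qed
  moreover have "(\<integral>\<^sup>+v. \<phi> v * ennreal (path_dens (Suc n) m v) \<partial>PiM {1..Suc n} (\<lambda>_. lborel))
      = (\<integral>\<^sup>+w. (\<integral>\<^sup>+x. \<phi> (w(Suc n := x)) * ennreal (path_dens (Suc n) m (w(Suc n := x))) \<partial>lborel)
           \<partial>PiM {1..n} (\<lambda>_. lborel))"
  proof -
    have "(\<lambda>v. \<phi> v * ennreal (path_dens (Suc n) m v)) \<in> borel_measurable (PiM (insert (Suc n) {1..n}) (\<lambda>_. lborel))"
      unfolding IN[symmetric] by measurable
    then show ?thesis
      unfolding IN by (subst L.product_nn_integral_insert) auto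
  qed
  moreover have "(\<integral>\<^sup>+w. \<psi> w * ennreal (path_dens n m w) \<partial>PiM {1..n} (\<lambda>_. lborel))
      = (\<integral>\<^sup>+w. (\<integral>\<^sup>+x. \<phi> (w(Suc n := x)) * ennreal (path_dens (Suc n) m (w(Suc n := x))) \<partial>lborel)
           \<partial>PiM {1..n} (\<lambda>_. lborel))"
    unfolding \<psi>_def by (intro nn_integral_cong nn_integral_obs_law_step[OF Suc.prems])
  ultimately show ?case
    by simp
qed

end

subsection \<open>The joint density of \<open>V\<^sub>1,\<dots>,V\<^sub>n\<close>\<close>

context lr_setting
begin

lemma distr_obs_on_change_time:
  assumes model: "model_Ms M \<theta> p q \<tau> X"
  shows "distr (density M (indicator {\<omega> \<in> space M. \<tau> \<omega> = m})) (PiM {1..n} (\<lambda>_. lborel)) (\<lambda>\<omega>. \<lambda>i\<in>{1..n}. X i \<omega>)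
       = density (PiM {1..n} (\<lambda>i. obs_law (i \<le> m))) (\<lambda>_. ennreal (\<theta> * (1 - \<theta>) ^ m))"
    (is "?D = ?R")
proof -
  interpret M: prob_space M
    using model by (simp add: model_Ms_def)
  interpret R: product_sigma_finite "\<lambda>i. obs_law (i \<le> m)"
    by (rule product_sigma_finite_obs_law)
  define S where "S = {\<omega> \<in> space M. \<tau> \<omega> = m}"
  have [measurable]: "\<tau> \<in> measurable M (count_space UNIV)" "\<And>i. X i \<in> borel_measurable M"
    using model by (auto simp: model_Ms_def)
  have S: "S \<in> sets M"
    unfolding S_def by measurable
  have X_meas: "(\<lambda>\<omega>. \<lambda>i\<in>{1..n}. X i \<omega>) \<in> measurable (density M (indicator S)) (PiM {1..n} (\<lambda>_. lborel))"
    by (simp add: measurable_restrict)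
  show ?thesis
  proof (rule measure_eqI_PiM_finite[where I="{1..n}" and M="\<lambda>_. lborel" and A="\<lambda>_. space (PiM {1..n} (\<lambda>_. lborel))"])
    fix A :: "nat \<Rightarrow> real set"
    assume A: "\<And>i. i \<in> {1..n} \<Longrightarrow> A i \<in> sets lborel"
    then have PA: "Pi\<^sub>E {1..n} A \<in> sets (PiM {1..n} (\<lambda>_. lborel))"
      by (intro sets_PiM_I_finite) auto
    have "emeasure ?D (Pi\<^sub>E {1..n} A) = emeasure M (S \<inter> ((\<lambda>\<omega>. \<lambda>i\<in>{1..n}. X i \<omega>) -` Pi\<^sub>E {1..n} A \<inter> space M))"
      using PA X_meas by (simp add: emeasure_distr emeasure_restricted[OF S] S_def[symmetric])
    also have "S \<inter> ((\<lambda>\<omega>. \<lambda>i\<in>{1..n}. X i \<omega>) -` Pi\<^sub>E {1..n} A \<inter> space M)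
        = {\<omega> \<in> space M. \<tau> \<omega> = m \<and> (\<forall>i\<in>{1..n}. X i \<omega> \<in> A i)}"
      by (auto simp: S_def PiE_iff)
    also have "emeasure M \<dots> = ennreal (\<theta> * (1 - \<theta>) ^ m * (\<Prod>i\<in>{1..n}. measure (obs_law (i \<le> m)) (A i)))"
      using model A by (simp add: model_Ms_def M.emeasure_eq_measure obs_law_def)
    also have "\<dots> = ennreal (\<theta> * (1 - \<theta>) ^ m) * (\<Prod>i\<in>{1..n}. emeasure (obs_law (i \<le> m)) (A i))"
      using \<theta> by (simp add: ennreal_mult prod_nonneg prod_ennreal
          finite_measure.emeasure_eq_measure[OF prob_space.finite_measure[OF prob_space_obs_law]])
    also have "\<dots> = emeasure ?R (Pi\<^sub>E {1..n} A)"
      using R.emeasure_PiM[of "{1..n}" A] A PA by (simp add: emeasure_density_const sets_PiM_obs_law)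
    finally show "emeasure ?D (Pi\<^sub>E {1..n} A) = emeasure ?R (Pi\<^sub>E {1..n} A)" .
  next
    have "emeasure ?D (space (PiM {1..n} (\<lambda>_. lborel)))
        = emeasure (density M (indicator S))
            ((\<lambda>\<omega>. \<lambda>i\<in>{1..n}. X i \<omega>) -` space (PiM {1..n} (\<lambda>_. lborel)) \<inter> space (density M (indicator S)))"
      unfolding S_def by (rule emeasure_distr[OF X_meas[unfolded S_def]]) simp
    also have "\<dots> \<le> emeasure (density M (indicator S)) (space (density M (indicator S)))"
      by (rule emeasure_space)
    also have "\<dots> \<le> emeasure M (space M)"
      using S by (simp add: emeasure_restricted emeasure_space)
    finally show "emeasure ?D (space (PiM {1..n} (\<lambda>_. lborel))) \<noteq> \<infinity>" for i :: nat
      by (auto simp: top_unique M.emeasure_space_1)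
  qed (auto simp: sets_PiM_obs_law space_PiM intro!: prod_algebraI_finite)
qed

lemma nn_integral_obs_on_change_time:
  assumes model: "model_Ms M \<theta> p q \<tau> X"
    and \<Phi>[measurable]: "\<Phi> \<in> borel_measurable (PiM {1..n} (\<lambda>_. lborel))"
  shows "(\<integral>\<^sup>+\<omega>. \<Phi> (\<lambda>i\<in>{1..n}. X i \<omega>) * indicator {\<omega> \<in> space M. \<tau> \<omega> = m} \<omega> \<partial>M)
       = ennreal (\<theta> * (1 - \<theta>) ^ m) * (\<integral>\<^sup>+x. \<Phi> x \<partial>PiM {1..n} (\<lambda>i. obs_law (i \<le> m)))"
proof -
  have [measurable]: "\<tau> \<in> measurable M (count_space UNIV)" "\<And>i. X i \<in> borel_measurable M"
    using model by (auto simp: model_Ms_def)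
  have [measurable]: "(\<lambda>\<omega>. \<lambda>i\<in>{1..n}. X i \<omega>) \<in> measurable M (PiM {1..n} (\<lambda>_. lborel))"
    by (rule measurable_restrict) simp
  have "(\<integral>\<^sup>+\<omega>. \<Phi> (\<lambda>i\<in>{1..n}. X i \<omega>) * indicator {\<omega> \<in> space M. \<tau> \<omega> = m} \<omega> \<partial>M)
      = (\<integral>\<^sup>+\<omega>. \<Phi> (\<lambda>i\<in>{1..n}. X i \<omega>) \<partial>density M (indicator {\<omega> \<in> space M. \<tau> \<omega> = m}))"
    by (subst nn_integral_density) (measurable, simp add: mult.commute)
  also have "\<dots> = (\<integral>\<^sup>+x. \<Phi> x \<partial>density (PiM {1..n} (\<lambda>i. obs_law (i \<le> m))) (\<lambda>_. ennreal (\<theta> * (1 - \<theta>) ^ m)))"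
    unfolding distr_obs_on_change_time[OF model, symmetric] by (rule nn_integral_distr[symmetric]) measurable
  also have "\<dots> = (\<integral>\<^sup>+x. ennreal (\<theta> * (1 - \<theta>) ^ m) * \<Phi> x \<partial>PiM {1..n} (\<lambda>i. obs_law (i \<le> m)))"
    by (rule nn_integral_density) measurable
  also have "\<dots> = ennreal (\<theta> * (1 - \<theta>) ^ m) * (\<integral>\<^sup>+x. \<Phi> x \<partial>PiM {1..n} (\<lambda>i. obs_law (i \<le> m)))"
    by (rule nn_integral_cmult) measurable
  finally show ?thesis .
qed

text \<open>The last term collects all change times \<open>m \<ge> n\<close>, for which \<open>path_dens n m = path_dens n n\<close>.\<close>

definition joint_dens :: "nat \<Rightarrow> (nat \<Rightarrow> real) \<Rightarrow> real" where
  "joint_dens n v = (if v \<in> unit_cube n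
     then (\<Sum>m<n. \<theta> * (1 - \<theta>) ^ m * path_dens n m v) + (1 - \<theta>) ^ n * path_dens n n v else 0)"

lemma sets_unit_cube[measurable]: "unit_cube n \<in> sets (PiM {1..n} (\<lambda>_. lborel))"
  unfolding unit_cube_def by (rule sets_PiM_I_finite) auto

lemma joint_dens_measurable[measurable]: "joint_dens n \<in> borel_measurable (PiM {1..n} (\<lambda>_. lborel))"
  unfolding joint_dens_def[abs_def] by measurable

lemma joint_dens_nonneg: "0 \<le> joint_dens n v"
  using \<theta> path_dens_nonneg by (auto simp: joint_dens_def intro!: add_nonneg_nonneg sum_nonneg)

lemma unit_cube_coord: "v \<in> unit_cube n \<Longrightarrow> i \<in> {1..n} \<Longrightarrow> 0 < v i \<and> v i < 1"
  by (auto simp: unit_cube_def PiE_iff)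

lemma prev_in_unit_interval:
  assumes "v \<in> unit_cube n" "i \<in> {1..n}"
  shows "0 \<le> prev v i \<and> prev v i < 1"
proof (cases "i = Suc 0")
  case False
  then have "i - 1 \<in> {1..n}"
    using assms(2) by auto
  then show ?thesis
    using unit_cube_coord[OF assms(1)] False by (simp add: prev_def less_imp_le)
qed (simp add: prev_def)

lemma path_dens_eq_0_outside_cube:
  assumes "v \<in> space (PiM {1..n} (\<lambda>_. lborel :: real measure))" "v \<notin> unit_cube n"
  shows "path_dens n m v = 0"
proof -
  obtain i where i: "i \<in> {1..n}" "\<not> (0 < v i \<and> v i < 1)"
    using assms by (auto simp: unit_cube_def space_PiM PiE_iff)
  have "trans_dens (i \<le> m) (prev v i) (v i) = 0"
    by (rule trans_dens_eq_0[OF i(2)])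
  then show ?thesis
    unfolding path_dens_def using i(1) by (meson finite_atLeastAtMost prod_zero)
qed

lemma suminf_path_dens:
  assumes v: "v \<in> space (PiM {1..n} (\<lambda>_. lborel :: real measure))"
  shows "(\<Sum>m. ennreal (\<theta> * (1 - \<theta>) ^ m * path_dens n m v)) = ennreal (joint_dens n v)"
proof (cases "v \<in> unit_cube n")
  case False
  then show ?thesis
    using path_dens_eq_0_outside_cube[OF v False] by (simp add: joint_dens_def)
next
  case True
  define f where "f m = \<theta> * (1 - \<theta>) ^ m * path_dens n m v" for m
  have tail: "(\<lambda>k. f (k + n)) = (\<lambda>k. \<theta> * (1 - \<theta>) ^ n * path_dens n n v * (1 - \<theta>) ^ k)"
  proof
    fix k
    show "f (k + n) = \<theta> * (1 - \<theta>) ^ n * path_dens n n v * (1 - \<theta>) ^ k"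
      using path_dens_after_horizon[of n "k + n"] by (simp add: f_def power_add mult_ac)
  qed
  have geom: "summable (\<lambda>k. (1 - \<theta>) ^ k)" "(\<Sum>k. (1 - \<theta>) ^ k) = 1 / \<theta>"
    using \<theta> by (auto intro!: summable_geometric simp: suminf_geometric)
  then have "summable (\<lambda>k. f (k + n))" and tail_sum: "(\<Sum>k. f (k + n)) = (1 - \<theta>) ^ n * path_dens n n v"
    using \<theta> unfolding tail by (auto intro!: summable_mult simp: suminf_mult)
  then have f: "summable f"
    by (simp only: summable_iff_shift)
  have "suminf f = (\<Sum>k. f (k + n)) + (\<Sum>m<n. f m)"
    by (rule suminf_split_initial_segment[OF f])
  then have "suminf f = joint_dens n v"
    using True tail_sum by (simp add: joint_dens_def f_def)
  moreover have "(\<Sum>m. ennreal (f m)) = ennreal (suminf f)"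
    using \<theta> path_dens_nonneg by (intro suminf_ennreal2 f) (simp add: f_def)
  ultimately show ?thesis
    by (simp add: f_def)
qed

lemma restrict_Vseq_eq_Vvec:
  "(\<lambda>i\<in>{1..n}. Vseq \<theta> p q X i \<omega>) = Vvec n (\<lambda>i\<in>{1..n}. X i \<omega>)"
proof
  fix i
  have "i \<in> {1..n} \<Longrightarrow> Vfun i (\<lambda>j. X j \<omega>) = Vfun i (\<lambda>j\<in>{1..n}. X j \<omega>)"
    by (rule Vfun_cong) auto
  then show "(\<lambda>i\<in>{1..n}. Vseq \<theta> p q X i \<omega>) i = Vvec n (\<lambda>i\<in>{1..n}. X i \<omega>) i"
    by (simp add: Vvec_def Vseq_eq_Vfun)
qed

lemma nn_integral_V:
  assumes model: "model_Ms M \<theta> p q \<tau> X"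
    and \<Phi>[measurable]: "\<Phi> \<in> borel_measurable (PiM {1..n} (\<lambda>_. lborel))"
  shows "(\<integral>\<^sup>+\<omega>. \<Phi> (\<lambda>i\<in>{1..n}. Vseq \<theta> p q X i \<omega>) \<partial>M)
       = (\<integral>\<^sup>+v. \<Phi> v * ennreal (joint_dens n v) \<partial>PiM {1..n} (\<lambda>_. lborel))"
proof -
  have [measurable]: "\<tau> \<in> measurable M (count_space UNIV)" "\<And>i. X i \<in> borel_measurable M"
    using model by (auto simp: model_Ms_def)
  have [measurable]: "(\<lambda>\<omega>. \<lambda>i\<in>{1..n}. X i \<omega>) \<in> measurable M (PiM {1..n} (\<lambda>_. lborel))"
    by (rule measurable_restrict) simp
  define S where "S m = {\<omega> \<in> space M. \<tau> \<omega> = m}" for m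
  have "(\<Sum>m. indicator (S m) \<omega> :: ennreal) = 1" if "\<omega> \<in> space M" for \<omega>
    using that suminf_finite[of "{\<tau> \<omega>}" "\<lambda>m. indicator (S m) \<omega> :: ennreal"] by (auto simp: S_def)
  then have "(\<integral>\<^sup>+\<omega>. \<Phi> (\<lambda>i\<in>{1..n}. Vseq \<theta> p q X i \<omega>) \<partial>M)
      = (\<integral>\<^sup>+\<omega>. (\<Sum>m. \<Phi> (Vvec n (\<lambda>i\<in>{1..n}. X i \<omega>)) * indicator (S m) \<omega>) \<partial>M)"
    unfolding restrict_Vseq_eq_Vvec by (intro nn_integral_cong) (simp add: ennreal_suminf_cmult)
  also have "\<dots> = (\<Sum>m. \<integral>\<^sup>+\<omega>. \<Phi> (Vvec n (\<lambda>i\<in>{1..n}. X i \<omega>)) * indicator (S m) \<omega> \<partial>M)"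
    unfolding S_def by (rule nn_integral_suminf) measurable
  also have "\<dots> = (\<Sum>m. ennreal (\<theta> * (1 - \<theta>) ^ m) * (\<integral>\<^sup>+x. \<Phi> (Vvec n x) \<partial>PiM {1..n} (\<lambda>i. obs_law (i \<le> m))))"
    unfolding S_def by (intro suminf_cong nn_integral_obs_on_change_time[OF model]) measurable
  also have "\<dots> = (\<Sum>m. \<integral>\<^sup>+v. \<Phi> v * ennreal (\<theta> * (1 - \<theta>) ^ m * path_dens n m v) \<partial>PiM {1..n} (\<lambda>_. lborel))"
  proof (intro suminf_cong)
    fix m
    have "ennreal (\<theta> * (1 - \<theta>) ^ m) * (\<integral>\<^sup>+x. \<Phi> (Vvec n x) \<partial>PiM {1..n} (\<lambda>i. obs_law (i \<le> m)))
        = ennreal (\<theta> * (1 - \<theta>) ^ m) * (\<integral>\<^sup>+v. \<Phi> v * ennreal (path_dens n m v) \<partial>PiM {1..n} (\<lambda>_. lborel))"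
      by (simp only: nn_integral_Vvec_obs_law[OF \<Phi>])
    also have "\<dots> = (\<integral>\<^sup>+v. ennreal (\<theta> * (1 - \<theta>) ^ m) * (\<Phi> v * ennreal (path_dens n m v)) \<partial>PiM {1..n} (\<lambda>_. lborel))"
      by (rule nn_integral_cmult[symmetric]) measurable
    also have "\<dots> = (\<integral>\<^sup>+v. \<Phi> v * ennreal (\<theta> * (1 - \<theta>) ^ m * path_dens n m v) \<partial>PiM {1..n} (\<lambda>_. lborel))"
      using \<theta> path_dens_nonneg by (intro nn_integral_cong) (simp add: ennreal_mult mult_ac)
    finally show "ennreal (\<theta> * (1 - \<theta>) ^ m) * (\<integral>\<^sup>+x. \<Phi> (Vvec n x) \<partial>PiM {1..n} (\<lambda>i. obs_law (i \<le> m)))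
        = (\<integral>\<^sup>+v. \<Phi> v * ennreal (\<theta> * (1 - \<theta>) ^ m * path_dens n m v) \<partial>PiM {1..n} (\<lambda>_. lborel))" .
  qed
  also have "\<dots> = (\<integral>\<^sup>+v. (\<Sum>m. \<Phi> v * ennreal (\<theta> * (1 - \<theta>) ^ m * path_dens n m v)) \<partial>PiM {1..n} (\<lambda>_. lborel))"
    by (rule nn_integral_suminf[symmetric]) measurable
  also have "\<dots> = (\<integral>\<^sup>+v. \<Phi> v * ennreal (joint_dens n v) \<partial>PiM {1..n} (\<lambda>_. lborel))"
    by (intro nn_integral_cong) (simp add: ennreal_suminf_cmult suminf_path_dens)
  finally show ?thesis .
qed

lemma distributed_V:
  assumes model: "model_Ms M \<theta> p q \<tau> X"
  shows "distributed M (PiM {1..n} (\<lambda>_. lborel)) (\<lambda>\<omega>. \<lambda>i\<in>{1..n}. Vseq \<theta> p q X i \<omega>)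
           (\<lambda>v. ennreal (joint_dens n v))"
proof -
  have "X i \<in> borel_measurable M" for i
    using model by (simp add: model_Ms_def)
  then have "Vseq \<theta> p q X i \<in> borel_measurable M" for i
    by (intro Vseq_measurable)
  then have V_meas: "(\<lambda>\<omega>. \<lambda>i\<in>{1..n}. Vseq \<theta> p q X i \<omega>) \<in> measurable M (PiM {1..n} (\<lambda>_. lborel))"
    by (intro measurable_restrict) simp
  have "distr M (PiM {1..n} (\<lambda>_. lborel)) (\<lambda>\<omega>. \<lambda>i\<in>{1..n}. Vseq \<theta> p q X i \<omega>)
      = density (PiM {1..n} (\<lambda>_. lborel)) (\<lambda>v. ennreal (joint_dens n v))"
  proof (rule measure_eqI)
    fix A
    assume "A \<in> sets (distr M (PiM {1..n} (\<lambda>_. lborel)) (\<lambda>\<omega>. \<lambda>i\<in>{1..n}. Vseq \<theta> p q X i \<omega>))"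
    then have [measurable]: "A \<in> sets (PiM {1..n} (\<lambda>_. lborel))"
      by simp
    have "emeasure (distr M (PiM {1..n} (\<lambda>_. lborel)) (\<lambda>\<omega>. \<lambda>i\<in>{1..n}. Vseq \<theta> p q X i \<omega>)) A
        = (\<integral>\<^sup>+v. indicator A v \<partial>distr M (PiM {1..n} (\<lambda>_. lborel)) (\<lambda>\<omega>. \<lambda>i\<in>{1..n}. Vseq \<theta> p q X i \<omega>))"
      by (rule nn_integral_indicator[symmetric]) measurable
    also have "\<dots> = (\<integral>\<^sup>+\<omega>. indicator A (\<lambda>i\<in>{1..n}. Vseq \<theta> p q X i \<omega>) \<partial>M)"
      by (rule nn_integral_distr[OF V_meas]) measurable
    also have "\<dots> = (\<integral>\<^sup>+v. indicator A v * ennreal (joint_dens n v) \<partial>PiM {1..n} (\<lambda>_. lborel))"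
      by (rule nn_integral_V[OF model]) measurable
    also have "\<dots> = emeasure (density (PiM {1..n} (\<lambda>_. lborel)) (\<lambda>v. ennreal (joint_dens n v))) A"
      by (subst emeasure_density) (measurable, simp add: mult.commute)
    finally show "emeasure (distr M (PiM {1..n} (\<lambda>_. lborel)) (\<lambda>\<omega>. \<lambda>i\<in>{1..n}. Vseq \<theta> p q X i \<omega>)) A
        = emeasure (density (PiM {1..n} (\<lambda>_. lborel)) (\<lambda>v. ennreal (joint_dens n v))) A" .
  qed simp
  moreover have "(\<lambda>v. ennreal (joint_dens n v)) \<in> borel_measurable (PiM {1..n} (\<lambda>_. lborel))"
    by measurable
  ultimately show ?thesis
    using V_meas unfolding distributed_def by blast
qed

lemma continuous_on_prev: "continuous_on S (\<lambda>v :: nat \<Rightarrow> real. prev v i)"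
  using continuous_on_subset[OF continuous_on_product_coordinates[of "i - 1"]]
  by (cases "i = Suc 0") (simp_all add: prev_def)

lemma continuous_on_path_dens: "continuous_on (unit_cube n) (path_dens n m)"
  unfolding path_dens_def
proof (rule continuous_on_prod)
  fix i assume "i \<in> {1..n}"
  then show "continuous_on (unit_cube n) (\<lambda>v. trans_dens (i \<le> m) (prev v i) (v i))"
    using unit_cube_coord prev_in_unit_interval
    by (intro continuous_on_trans_dens continuous_on_prev
        continuous_on_subset[OF continuous_on_product_coordinates]) blast+
qed

lemma path_dens_pos: "v \<in> unit_cube n \<Longrightarrow> 0 < path_dens n m v"
  unfolding path_dens_def
  by (intro prod_pos) (use unit_cube_coord prev_in_unit_interval trans_dens_pos in blast)

lemma continuous_on_joint_dens: "continuous_on (unit_cube n) (joint_dens n)"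
proof -
  have "continuous_on (unit_cube n)
      (\<lambda>v. (\<Sum>m<n. \<theta> * (1 - \<theta>) ^ m * path_dens n m v) + (1 - \<theta>) ^ n * path_dens n n v)"
    by (intro continuous_intros continuous_on_path_dens)
  then show ?thesis
    by (rule continuous_on_eq) (simp add: joint_dens_def)
qed

lemma joint_dens_pos: "v \<in> unit_cube n \<Longrightarrow> 0 < joint_dens n v"
  using \<theta> path_dens_pos[of v n n] path_dens_nonneg
  by (auto simp: joint_dens_def intro!: add_nonneg_pos sum_nonneg)

lemma emeasure_lower_box_pos:
  assumes "v0 \<in> unit_cube t"
  shows "0 < emeasure (PiM {1..t} (\<lambda>_. lborel)) (Pi\<^sub>E {1..t} (\<lambda>i. {0<..<v0 i}))"
  using unit_cube_coord[OF assms] by (auto intro!: emeasure_PiM_lborel_box_pos)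

lemma lower_box_subset:
  assumes "v0 \<in> unit_cube t"
  shows "Pi\<^sub>E {1..t} (\<lambda>i. {0<..<v0 i}) \<subseteq> unit_cube t \<inter> Pi\<^sub>E {1..t} (\<lambda>i. {..v0 i})"
  using unit_cube_coord[OF assms]
  by (auto simp: unit_cube_def PiE_iff less_imp_le) (meson atLeastAtMost_iff less_trans)

lemma measure_V_box_pos:
  assumes model: "model_Ms M \<theta> p q \<tau> X" and v0: "v0 \<in> unit_cube t"
  shows "0 < measure M {\<omega> \<in> space M. \<forall>i\<in>{1..t}. Vseq \<theta> p q X i \<omega> \<le> v0 i}"
proof -
  interpret M: prob_space M
    using model by (simp add: model_Ms_def)
  let ?V = "\<lambda>\<omega>. \<lambda>i\<in>{1..t}. Vseq \<theta> p q X i \<omega>"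
  define B where "B = Pi\<^sub>E {1..t} (\<lambda>i. {..v0 i})"
  have [measurable]: "B \<in> sets (PiM {1..t} (\<lambda>_. lborel))"
    unfolding B_def by (rule sets_PiM_I_finite) auto
  have D: "distributed M (PiM {1..t} (\<lambda>_. lborel)) ?V (\<lambda>v. ennreal (joint_dens t v))"
    by (rule distributed_V[OF model])
  have "emeasure M {\<omega> \<in> space M. \<forall>i\<in>{1..t}. Vseq \<theta> p q X i \<omega> \<le> v0 i} = emeasure M (?V -` B \<inter> space M)"
    by (rule arg_cong[where f="emeasure M"]) (auto simp: B_def PiE_iff)
  also have "emeasure M (?V -` B \<inter> space M) = emeasure (distr M (PiM {1..t} (\<lambda>_. lborel)) ?V) B"
    by (rule emeasure_distr[symmetric, OF distributed_measurable[OF D]]) measurable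
  also have "\<dots> = emeasure (density (PiM {1..t} (\<lambda>_. lborel)) (\<lambda>v. ennreal (joint_dens t v))) B"
    by (simp only: distributed_distr_eq_density[OF D])
  also have "\<dots> = (\<integral>\<^sup>+v. ennreal (joint_dens t v) * indicator B v \<partial>PiM {1..t} (\<lambda>_. lborel))"
    by (rule emeasure_density) measurable
  also have "0 < \<dots>"
  proof (rule nn_integral_pos_if_pos_on[where C="Pi\<^sub>E {1..t} (\<lambda>i. {0<..<v0 i})"])
    show "Pi\<^sub>E {1..t} (\<lambda>i. {0<..<v0 i}) \<in> sets (PiM {1..t} (\<lambda>_. lborel))"
      by (rule sets_PiM_I_finite) auto
    fix v assume "v \<in> Pi\<^sub>E {1..t} (\<lambda>i. {0<..<v0 i})"
    then have "v \<in> unit_cube t" "v \<in> B"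
      using lower_box_subset[OF v0] by (auto simp only: B_def)
    then show "0 < ennreal (joint_dens t v) * indicator B v"
      using joint_dens_pos by simp
  qed (use emeasure_lower_box_pos[OF v0] in measurable)
  finally show ?thesis
    by (simp add: M.emeasure_eq_measure)
qed

text \<open>Splitting \<open>joint_dens (Suc t)\<close> according to whether the change has happened by time \<open>t\<close>
  (then \<open>X\<^sub>t\<^sub>+\<^sub>1\<close> follows \<open>q\<close>) or not.\<close>

definition changed_weight :: "nat \<Rightarrow> (nat \<Rightarrow> real) \<Rightarrow> real" where
  "changed_weight t w = (\<Sum>m<Suc t. \<theta> * (1 - \<theta>) ^ m * path_dens t m w)"

definition unchanged_weight :: "nat \<Rightarrow> (nat \<Rightarrow> real) \<Rightarrow> real" where
  "unchanged_weight t w = (1 - \<theta>) ^ Suc t * path_dens t t w"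

definition next_dens :: "nat \<Rightarrow> real \<Rightarrow> (nat \<Rightarrow> real) \<Rightarrow> real" where
  "next_dens t x w = (if w \<in> unit_cube t
     then changed_weight t w * trans_dens False (prev w (Suc t)) x
        + unchanged_weight t w * trans_dens True (prev w (Suc t)) x
     else 0)"

lemma changed_weight_nonneg: "0 \<le> changed_weight t w"
  unfolding changed_weight_def using \<theta> path_dens_nonneg by (intro sum_nonneg) simp

lemma unchanged_weight_nonneg: "0 \<le> unchanged_weight t w"
  unfolding unchanged_weight_def using \<theta> path_dens_nonneg by simp

lemma changed_plus_unchanged_weight:
  "w \<in> unit_cube t \<Longrightarrow> changed_weight t w + unchanged_weight t w = joint_dens t w"
  by (simp add: changed_weight_def unchanged_weight_def joint_dens_def algebra_simps)

lemma upd_in_unit_cube_iff: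
  assumes "w \<in> extensional {1..t}"
  shows "w(Suc t := x) \<in> unit_cube (Suc t) \<longleftrightarrow> w \<in> unit_cube t \<and> 0 < x \<and> x < 1"
proof -
  have "w(Suc t := x) \<in> extensional {1..Suc t}"
    using assms by (auto simp: extensional_def)
  then show ?thesis
    using assms unfolding unit_cube_def PiE_iff by (auto simp: le_Suc_eq)
qed

lemma joint_dens_upd:
  assumes w: "w \<in> space (PiM {1..t} (\<lambda>_. lborel :: real measure))"
  shows "joint_dens (Suc t) (w(Suc t := x)) = next_dens t x w"
proof -
  have cube: "w(Suc t := x) \<in> unit_cube (Suc t) \<longleftrightarrow> w \<in> unit_cube t \<and> 0 < x \<and> x < 1"
    using w by (intro upd_in_unit_cube_iff) (simp add: space_PiM PiE_iff)
  have "(\<Sum>m<Suc t. \<theta> * (1 - \<theta>) ^ m * path_dens (Suc t) m (w(Suc t := x)))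
      = changed_weight t w * trans_dens False (prev w (Suc t)) x"
    unfolding changed_weight_def sum_distrib_right path_dens_upd by (intro sum.cong) simp_all
  moreover have "path_dens (Suc t) (Suc t) (w(Suc t := x))
      = trans_dens True (prev w (Suc t)) x * path_dens t t w"
    using path_dens_after_horizon[of t "Suc t" w] by (simp add: path_dens_upd)
  ultimately show ?thesis
    using cube trans_dens_eq_0
    by (auto simp: joint_dens_def next_dens_def unchanged_weight_def mult_ac)
qed

lemma next_dens_bounded:
  assumes t: "1 \<le> t" and c: "c < 1" and "0 < \<alpha>" "\<beta> < 1"
  shows "\<exists>C\<ge>0. \<forall>w x. w t \<le> c \<longrightarrow> x \<in> {\<alpha>..\<beta>} \<longrightarrow> next_dens t x w \<le> C * joint_dens t w"
proof -
  obtain C1 where C1: "\<forall>w\<in>{0..max c 0}. \<forall>x\<in>{\<alpha>..\<beta>}. trans_dens False w x \<le> C1"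
    using trans_dens_bounded[of "max c 0" \<alpha> \<beta> False] assms by auto
  obtain C2 where C2: "\<forall>w\<in>{0..max c 0}. \<forall>x\<in>{\<alpha>..\<beta>}. trans_dens True w x \<le> C2"
    using trans_dens_bounded[of "max c 0" \<alpha> \<beta> True] assms by auto
  define C where "C = max 0 (max C1 C2)"
  have "next_dens t x w \<le> C * joint_dens t w" if "w t \<le> c" "x \<in> {\<alpha>..\<beta>}" for w x
  proof (cases "w \<in> unit_cube t")
    case True
    have "prev w (Suc t) = w t" "w t \<in> {0..max c 0}"
      using t that unit_cube_coord[OF True, of t] by (auto simp: prev_def)
    then have "trans_dens False (prev w (Suc t)) x \<le> C" "trans_dens True (prev w (Suc t)) x \<le> C"
      using C1 C2 that(2) by (fastforce simp: C_def)+
    then have "next_dens t x w \<le> changed_weight t w * C + unchanged_weight t w * C"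
      using True changed_weight_nonneg unchanged_weight_nonneg
      by (auto simp: next_dens_def intro!: add_mono mult_left_mono)
    also have "\<dots> = C * joint_dens t w"
      using changed_plus_unchanged_weight[OF True] by (metis distrib_right mult.commute)
    finally show ?thesis .
  qed (simp add: next_dens_def joint_dens_def)
  then show ?thesis
    by (intro exI[of _ C]) (auto simp: C_def)
qed

end

subsection \<open>Conditioning on a box\<close>

locale box_conditioning = lr_setting +
  fixes M :: "'a measure" and \<tau> :: "'a \<Rightarrow> nat" and X :: "nat \<Rightarrow> 'a \<Rightarrow> real"
    and t :: nat and v0 :: "nat \<Rightarrow> real"
  assumes model: "model_Ms M \<theta> p q \<tau> X" and t: "1 \<le> t" and v0: "v0 \<in> unit_cube t"
begin

definition box :: "(nat \<Rightarrow> real) set" where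
  "box = Pi\<^sub>E {1..t} (\<lambda>i. {..v0 i})"

definition box_marginal :: "real \<Rightarrow> ennreal" where
  "box_marginal x =
     (\<integral>\<^sup>+w. indicator box w * ennreal (joint_dens (Suc t) (w(Suc t := x))) \<partial>PiM {1..t} (\<lambda>_. lborel))"

lemma sets_box[measurable]: "box \<in> sets (PiM {1..t} (\<lambda>_. lborel))"
  unfolding box_def by (rule sets_PiM_I_finite) auto

lemma fun_upd_Suc_pair_measurable[measurable]:
  "(\<lambda>(x, w). w(Suc t := x)) \<in> measurable (lborel \<Otimes>\<^sub>M PiM {1..t} (\<lambda>_. lborel)) (PiM {1..Suc t} (\<lambda>_. lborel))"
  unfolding case_prod_beta'
  by (rule measurable_fun_upd[where J="{1..t}"]) auto

lemma fun_upd_Suc_measurable[measurable]: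
  "(\<lambda>w. w(Suc t := x)) \<in> measurable (PiM {1..t} (\<lambda>_. lborel)) (PiM {1..Suc t} (\<lambda>_. lborel))"
  by (rule measurable_fun_upd[where J="{1..t}"]) auto

lemma box_marginal_measurable[measurable]: "box_marginal \<in> borel_measurable borel"
proof -
  interpret L: product_sigma_finite "\<lambda>_::nat. lborel :: real measure"
    by (rule product_sigma_finite_lborel)
  interpret S: sigma_finite_measure "PiM {1..t} (\<lambda>_. lborel :: real measure)"
    by (rule L.sigma_finite) simp
  have "(\<lambda>(x, w). joint_dens (Suc t) (w(Suc t := x))) \<in> borel_measurable (lborel \<Otimes>\<^sub>M PiM {1..t} (\<lambda>_. lborel))"
    using measurable_compose[OF fun_upd_Suc_pair_measurable joint_dens_measurable] by (simp add: case_prod_beta')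
  then show ?thesis
    unfolding box_marginal_def[abs_def] by (subst measurable_lborel2[symmetric]) measurable
qed

lemma box_marginal_eq_next_dens:
  "box_marginal x = (\<integral>\<^sup>+w. ennreal (indicator box w * next_dens t x w) \<partial>PiM {1..t} (\<lambda>_. lborel))"
  unfolding box_marginal_def by (intro nn_integral_cong) (simp add: joint_dens_upd indicator_mult_ennreal)

lemma box_marginal_integrand_measurable:
  "(\<lambda>w. ennreal (indicator box w * next_dens t x w)) \<in> borel_measurable (PiM {1..t} (\<lambda>_. lborel))"
proof -
  have "(\<lambda>w. indicator box w * ennreal (joint_dens (Suc t) (w(Suc t := x))))
      \<in> borel_measurable (PiM {1..t} (\<lambda>_. lborel))"
    by measurable
  then show ?thesis
    by (rule measurable_cong[THEN iffD1, rotated]) (simp add: joint_dens_upd indicator_mult_ennreal)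
qed

lemma box_marginal_eq_0:
  assumes "\<not> (0 < x \<and> x < 1)"
  shows "box_marginal x = 0"
proof -
  have "next_dens t x w = 0" for w
    using trans_dens_eq_0[OF assms] by (simp add: next_dens_def)
  then show ?thesis
    by (simp add: box_marginal_eq_next_dens)
qed

lemma nn_integral_joint_dens: "(\<integral>\<^sup>+w. ennreal (joint_dens t w) \<partial>PiM {1..t} (\<lambda>_. lborel)) = 1"
proof -
  interpret prob_space M
    using model by (simp add: model_Ms_def)
  have "(\<integral>\<^sup>+\<omega>. 1 \<partial>M) = (\<integral>\<^sup>+w. 1 * ennreal (joint_dens t w) \<partial>PiM {1..t} (\<lambda>_. lborel))"
    by (rule nn_integral_V[OF model]) simp
  then show ?thesis
    by (simp add: emeasure_space_1)
qed

lemma box_marginal_dominated: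
  assumes "0 < \<alpha>" "\<beta> < 1"
  shows "\<exists>C\<ge>0. \<forall>x\<in>{\<alpha>..\<beta>}. \<forall>w. ennreal (indicator box w * next_dens t x w) \<le> ennreal (C * joint_dens t w)"
proof -
  have "v0 t < 1"
    using unit_cube_coord[OF v0, of t] t by simp
  then obtain C where C: "C \<ge> 0" "\<And>w x. w t \<le> v0 t \<Longrightarrow> x \<in> {\<alpha>..\<beta>} \<Longrightarrow> next_dens t x w \<le> C * joint_dens t w"
    using next_dens_bounded[OF t _ assms] by blast
  have "indicator box w * next_dens t x w \<le> C * joint_dens t w" if "x \<in> {\<alpha>..\<beta>}" for x w
    using C that t joint_dens_nonneg[of t w] by (auto simp: box_def indicator_def PiE_iff)
  then show ?thesis
    using C(1) by (intro exI[of _ C]) (auto intro: ennreal_leI)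
qed

lemma box_marginal_finite: "box_marginal x < \<infinity>"
proof (cases "0 < x \<and> x < 1")
  case True
  then obtain C where C: "\<And>w. ennreal (indicator box w * next_dens t x w) \<le> ennreal (C * joint_dens t w)"
    using box_marginal_dominated[of x x] by auto
  have "box_marginal x \<le> (\<integral>\<^sup>+w. ennreal C * ennreal (joint_dens t w) \<partial>PiM {1..t} (\<lambda>_. lborel))"
    unfolding box_marginal_eq_next_dens using C
    by (intro nn_integral_mono) (metis ennreal_mult'' joint_dens_nonneg)
  also have "\<dots> = ennreal C * (\<integral>\<^sup>+w. ennreal (joint_dens t w) \<partial>PiM {1..t} (\<lambda>_. lborel))"
    by (rule nn_integral_cmult) measurable
  also have "\<dots> = ennreal C"
    unfolding nn_integral_joint_dens by simp
  finally show ?thesis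
    by (simp add: le_less_trans)
qed (simp add: box_marginal_eq_0)

lemma box_marginal_pos:
  assumes "0 < x" "x < 1"
  shows "0 < box_marginal x"
  unfolding box_marginal_eq_next_dens
proof (rule nn_integral_pos_if_pos_on[where C="Pi\<^sub>E {1..t} (\<lambda>i. {0<..<v0 i})"])
  show "Pi\<^sub>E {1..t} (\<lambda>i. {0<..<v0 i}) \<in> sets (PiM {1..t} (\<lambda>_. lborel))"
    by (rule sets_PiM_I_finite) auto
  fix w assume "w \<in> Pi\<^sub>E {1..t} (\<lambda>i. {0<..<v0 i})"
  then have w: "w \<in> unit_cube t" "w \<in> box"
    using lower_box_subset[OF v0] by (auto simp only: box_def)
  then have "prev w (Suc t) = w t" "0 \<le> w t" "w t < 1"
    using t unit_cube_coord[OF w(1), of t] by (auto simp: prev_def)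
  then have "0 < unchanged_weight t w * trans_dens True (prev w (Suc t)) x"
    using \<theta> path_dens_pos[OF w(1)] trans_dens_pos assms by (simp add: unchanged_weight_def)
  then have "0 < next_dens t x w"
    using w changed_weight_nonneg trans_dens_nonneg
    by (simp add: next_dens_def add_nonneg_pos)
  then show "0 < ennreal (indicator box w * next_dens t x w)"
    using w by simp
qed (use box_marginal_integrand_measurable emeasure_lower_box_pos[OF v0] in auto)

lemma continuous_on_box_marginal: "continuous_on {0<..<1} (\<lambda>x. enn2real (box_marginal x))"
  unfolding box_marginal_eq_next_dens
proof (rule continuous_on_nn_integral_param)
  show "(\<lambda>w. ennreal (indicator box w * next_dens t x w)) \<in> borel_measurable (PiM {1..t} (\<lambda>_. lborel))" for x
    by (rule box_marginal_integrand_measurable)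
  show "continuous_on {0<..<1} (\<lambda>x. indicator box w * next_dens t x w)" for w
    unfolding next_dens_def
    by (cases "w \<in> unit_cube t") (auto intro!: continuous_intros continuous_on_trans_dens_right)
  fix \<alpha> \<beta> :: real
  assume "\<alpha> < \<beta>" and sub: "{\<alpha>..\<beta>} \<subseteq> {0<..<1}"
  then have "0 < \<alpha>" "\<beta> < 1"
    using subsetD[OF sub, of \<alpha>] subsetD[OF sub, of \<beta>] by auto
  then obtain C where "C \<ge> 0"
    and dom: "\<forall>x\<in>{\<alpha>..\<beta>}. \<forall>w. ennreal (indicator box w * next_dens t x w) \<le> ennreal (C * joint_dens t w)"
    using box_marginal_dominated by blast
  have "(\<integral>\<^sup>+w. ennreal (C * joint_dens t w) \<partial>PiM {1..t} (\<lambda>_. lborel))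
      = (\<integral>\<^sup>+w. ennreal C * ennreal (joint_dens t w) \<partial>PiM {1..t} (\<lambda>_. lborel))"
    using \<open>C \<ge> 0\<close> joint_dens_nonneg by (intro nn_integral_cong) (simp add: ennreal_mult)
  also have "\<dots> = ennreal C * (\<integral>\<^sup>+w. ennreal (joint_dens t w) \<partial>PiM {1..t} (\<lambda>_. lborel))"
    by (rule nn_integral_cmult) measurable
  finally have "(\<integral>\<^sup>+w. ennreal (C * joint_dens t w) \<partial>PiM {1..t} (\<lambda>_. lborel)) = ennreal C"
    unfolding nn_integral_joint_dens by simp
  moreover have g_meas: "(\<lambda>w. ennreal (C * joint_dens t w)) \<in> borel_measurable (PiM {1..t} (\<lambda>_. lborel))"
    by measurable
  ultimately show "\<exists>g\<in>borel_measurable (PiM {1..t} (\<lambda>_. lborel)).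
      (\<integral>\<^sup>+w. g w \<partial>PiM {1..t} (\<lambda>_. lborel)) < \<infinity>
      \<and> (\<forall>x\<in>{\<alpha>..\<beta>}. \<forall>w. ennreal (indicator box w * next_dens t x w) \<le> g w)"
    using dom by (intro bexI[OF _ g_meas]) auto
qed (simp_all add: open_greaterThanLessThan)

end

context box_conditioning
begin

definition box_event :: "'a set" where
  "box_event = {\<omega> \<in> space M. \<forall>i\<in>{1..t}. Vseq \<theta> p q X i \<omega> \<le> v0 i}"

lemma V_measurable[measurable]: "Vseq \<theta> p q X i \<in> borel_measurable M"
  using model by (intro Vseq_measurable) (simp add: model_Ms_def)

lemma sets_box_event[measurable]: "box_event \<in> sets M"
proof -
  have "(\<lambda>\<omega>. \<lambda>i\<in>{1..t}. Vseq \<theta> p q X i \<omega>) -` box \<inter> space M \<in> sets M"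
    by (rule measurable_sets[OF _ sets_box]) (rule measurable_restrict, simp)
  also have "(\<lambda>\<omega>. \<lambda>i\<in>{1..t}. Vseq \<theta> p q X i \<omega>) -` box \<inter> space M = box_event"
    by (auto simp: box_def box_event_def PiE_iff)
  finally show ?thesis .
qed

definition box_times :: "real set \<Rightarrow> (nat \<Rightarrow> real) set" where
  "box_times A = Pi\<^sub>E {1..Suc t} (\<lambda>i. if i = Suc t then A else {..v0 i})"

lemma sets_box_times[measurable]:
  "A \<in> sets borel \<Longrightarrow> box_times A \<in> sets (PiM {1..Suc t} (\<lambda>_. lborel))"
  unfolding box_times_def by (rule sets_PiM_I_finite) auto

lemma restrict_in_box_times_iff:
  "restrict f {1..Suc t} \<in> box_times A \<longleftrightarrow> f (Suc t) \<in> A \<and> (\<forall>i\<in>{1..t}. f i \<le> v0 i)"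
proof -
  have "{1..Suc t} = insert (Suc t) {1..t}"
    by auto
  then show ?thesis
    unfolding box_times_def restrict_PiE_iff by auto
qed

lemma upd_in_box_times_iff:
  assumes "w \<in> extensional {1..t}"
  shows "w(Suc t := x) \<in> box_times A \<longleftrightarrow> x \<in> A \<and> w \<in> box"
proof -
  have "restrict (w(Suc t := x)) {1..Suc t} = w(Suc t := x)"
    using assms by (intro extensional_restrict) (auto simp: extensional_def)
  moreover have "w \<in> box \<longleftrightarrow> (\<forall>i\<in>{1..t}. w i \<le> v0 i)"
    using assms by (simp add: box_def PiE_iff)
  ultimately show ?thesis
    using restrict_in_box_times_iff[of "w(Suc t := x)" A] by simp
qed

lemma emeasure_box_event_V_next:
  assumes A[measurable]: "A \<in> sets borel"
  shows "emeasure M (box_event \<inter> (Vseq \<theta> p q X (Suc t) -` A \<inter> space M))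
       = (\<integral>\<^sup>+x. indicator A x * box_marginal x \<partial>lborel)"
proof -
  interpret L: product_sigma_finite "\<lambda>_::nat. lborel :: real measure"
    by (rule product_sigma_finite_lborel)
  let ?V = "\<lambda>\<omega>. \<lambda>i\<in>{1..Suc t}. Vseq \<theta> p q X i \<omega>"
  have D: "distributed M (PiM {1..Suc t} (\<lambda>_. lborel)) ?V (\<lambda>v. ennreal (joint_dens (Suc t) v))"
    by (rule distributed_V[OF model])
  have IN: "{1..Suc t} = insert (Suc t) {1..t}"
    by auto
  have "box_event \<inter> (Vseq \<theta> p q X (Suc t) -` A \<inter> space M) = ?V -` box_times A \<inter> space M"
    unfolding vimage_def box_event_def by (simp only: restrict_in_box_times_iff) blast
  then have "emeasure M (box_event \<inter> (Vseq \<theta> p q X (Suc t) -` A \<inter> space M))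
      = emeasure (distr M (PiM {1..Suc t} (\<lambda>_. lborel)) ?V) (box_times A)"
    by (simp only:) (rule emeasure_distr[symmetric, OF distributed_measurable[OF D]], measurable)
  also have "\<dots> = (\<integral>\<^sup>+v. ennreal (joint_dens (Suc t) v) * indicator (box_times A) v \<partial>PiM {1..Suc t} (\<lambda>_. lborel))"
    unfolding distributed_distr_eq_density[OF D] by (rule emeasure_density) measurable
  also have "\<dots> = (\<integral>\<^sup>+x. (\<integral>\<^sup>+w. ennreal (joint_dens (Suc t) (w(Suc t := x)))
      * indicator (box_times A) (w(Suc t := x)) \<partial>PiM {1..t} (\<lambda>_. lborel)) \<partial>lborel)"
  proof -
    have f: "(\<lambda>v. ennreal (joint_dens (Suc t) v) * indicator (box_times A) v)
        \<in> borel_measurable (PiM (insert (Suc t) {1..t}) (\<lambda>_. lborel))"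
      unfolding IN[symmetric] by measurable
    show ?thesis
      unfolding IN by (rule L.product_nn_integral_insert_rev[OF _ _ f]) auto
  qed
  also have "\<dots> = (\<integral>\<^sup>+x. indicator A x * box_marginal x \<partial>lborel)"
  proof (intro nn_integral_cong)
    fix x
    have "(\<integral>\<^sup>+w. ennreal (joint_dens (Suc t) (w(Suc t := x))) * indicator (box_times A) (w(Suc t := x))
          \<partial>PiM {1..t} (\<lambda>_. lborel))
        = (\<integral>\<^sup>+w. indicator A x * (indicator box w * ennreal (joint_dens (Suc t) (w(Suc t := x))))
          \<partial>PiM {1..t} (\<lambda>_. lborel))"
      by (intro nn_integral_cong)
        (simp add: upd_in_box_times_iff space_PiM PiE_iff mult_ac split: split_indicator)
    also have "\<dots> = indicator A x * box_marginal x"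
      unfolding box_marginal_def by (rule nn_integral_cmult) measurable
    finally show "(\<integral>\<^sup>+w. ennreal (joint_dens (Suc t) (w(Suc t := x))) * indicator (box_times A) (w(Suc t := x))
        \<partial>PiM {1..t} (\<lambda>_. lborel)) = indicator A x * box_marginal x" .
  qed
  finally show ?thesis .
qed

lemma distr_V_next_given_box:
  "distr (uniform_measure M box_event) lborel (Vseq \<theta> p q X (Suc t))
     = density lborel (\<lambda>x. box_marginal x / emeasure M box_event)"
proof (rule measure_eqI)
  fix A assume "A \<in> sets (distr (uniform_measure M box_event) lborel (Vseq \<theta> p q X (Suc t)))"
  then have A[measurable]: "A \<in> sets borel"
    by simp
  have "emeasure (distr (uniform_measure M box_event) lborel (Vseq \<theta> p q X (Suc t))) A
      = emeasure (uniform_measure M box_event) (Vseq \<theta> p q X (Suc t) -` A \<inter> space (uniform_measure M box_event))"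
    by (rule emeasure_distr) measurable
  also have "\<dots> = emeasure M (box_event \<inter> (Vseq \<theta> p q X (Suc t) -` A \<inter> space M)) / emeasure M box_event"
    unfolding space_uniform_measure by (rule emeasure_uniform_measure) measurable
  also have "\<dots> = (\<integral>\<^sup>+x. indicator A x * box_marginal x / emeasure M box_event \<partial>lborel)"
    unfolding emeasure_box_event_V_next[OF A] by (rule nn_integral_divide[symmetric]) measurable
  also have "\<dots> = (\<integral>\<^sup>+x. box_marginal x / emeasure M box_event * indicator A x \<partial>lborel)"
    by (intro nn_integral_cong) (metis ennreal_times_divide mult.commute)
  also have "\<dots> = emeasure (density lborel (\<lambda>x. box_marginal x / emeasure M box_event)) A"
    by (rule emeasure_density[symmetric]) measurable
  finally show "emeasure (distr (uniform_measure M box_event) lborel (Vseq \<theta> p q X (Suc t))) A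
      = emeasure (density lborel (\<lambda>x. box_marginal x / emeasure M box_event)) A" .
qed simp

lemma conditional_density_V_next:
  "\<exists>h :: real \<Rightarrow> real.
     distributed (uniform_measure M box_event) lborel (Vseq \<theta> p q X (Suc t)) (\<lambda>x. ennreal (h x))
     \<and> continuous_on {0<..<1} h \<and> (\<forall>x\<in>{0<..<1}. 0 < h x) \<and> (\<forall>x. x \<notin> {0<..<1} \<longrightarrow> h x = 0)"
proof -
  interpret M: prob_space M
    using model by (simp add: model_Ms_def)
  define P where "P = measure M box_event"
  have P: "0 < P"
    unfolding P_def box_event_def by (rule measure_V_box_pos[OF model v0])
  define h where "h x = enn2real (box_marginal x) / P" for x
  have "ennreal (h x) = box_marginal x / emeasure M box_event" for x
  proof -
    have "ennreal (h x) = ennreal (enn2real (box_marginal x)) / ennreal P"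
      unfolding h_def using P by (intro divide_ennreal[symmetric]) simp_all
    then show ?thesis
      using box_marginal_finite[of x] by (simp add: P_def M.emeasure_eq_measure less_top)
  qed
  then have "distr (uniform_measure M box_event) lborel (Vseq \<theta> p q X (Suc t)) = density lborel (\<lambda>x. ennreal (h x))"
    by (simp only: distr_V_next_given_box)
  moreover have "(\<lambda>x. ennreal (h x)) \<in> borel_measurable lborel"
    unfolding h_def by measurable
  moreover have "Vseq \<theta> p q X (Suc t) \<in> measurable (uniform_measure M box_event) lborel"
    by measurable
  moreover have "continuous_on {0<..<1} h"
    unfolding h_def by (intro continuous_intros continuous_on_box_marginal) (use P in simp)
  moreover have "0 < h x" if "x \<in> {0<..<1}" for x
    using box_marginal_pos[of x] box_marginal_finite[of x] that P
    by (simp add: h_def enn2real_positive_iff)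
  moreover have "h x = 0" if "x \<notin> {0<..<1}" for x
    using that by (simp add: h_def box_marginal_eq_0)
  ultimately show ?thesis
    unfolding distributed_def by blast
qed

end

theorem mainTheorem20:
  fixes M :: "'a measure" and \<theta> :: real and p q :: "real \<Rightarrow> real"
    and \<tau> :: "'a \<Rightarrow> nat" and X :: "nat \<Rightarrow> 'a \<Rightarrow> real"
  assumes model: "model_Ms M \<theta> p q \<tau> X"
    and A1: "assumption_A1 p q"
  defines "V \<equiv> Vseq \<theta> p q X"
  shows
    "(\<forall>t\<ge>1. \<exists>g :: (nat \<Rightarrow> real) \<Rightarrow> real.
        distributed M (PiM {1..t} (\<lambda>_. lborel)) (\<lambda>\<omega>. \<lambda>i\<in>{1..t}. V i \<omega>) (\<lambda>v. ennreal (g v))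
        \<and> continuous_on (unit_cube t) g
        \<and> (\<forall>v\<in>unit_cube t. 0 < g v)
        \<and> (\<forall>v. v \<notin> unit_cube t \<longrightarrow> g v = 0))
     \<and> (\<forall>t\<ge>1. \<forall>v\<in>unit_cube t.
          0 < measure M {\<omega> \<in> space M. \<forall>i\<in>{1..t}. V i \<omega> \<le> v i})
     \<and> (\<forall>t\<ge>1. \<forall>v\<in>unit_cube t. \<exists>h :: real \<Rightarrow> real.
          distributed (uniform_measure M {\<omega> \<in> space M. \<forall>i\<in>{1..t}. V i \<omega> \<le> v i})
                      lborel (V (Suc t)) (\<lambda>x. ennreal (h x))
          \<and> continuous_on {0<..<1} h
          \<and> (\<forall>x\<in>{0<..<1}. 0 < h x)
          \<and> (\<forall>x. x \<notin> {0<..<1} \<longrightarrow> h x = 0))"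
proof -
  obtain fp where fp: "distributed (density lborel (\<lambda>x. ennreal (p x))) lborel (LR p q) (\<lambda>y. ennreal (fp y))"
      "continuous_on {0<..} fp" "\<forall>y>0. 0 < fp y" "\<forall>y\<le>0. fp y = 0"
    using A1 unfolding assumption_A1_def cont_pos_density_Rplus_def by blast
  obtain fq where fq: "distributed (density lborel (\<lambda>x. ennreal (q x))) lborel (LR p q) (\<lambda>y. ennreal (fq y))"
      "continuous_on {0<..} fq" "\<forall>y>0. 0 < fq y" "\<forall>y\<le>0. fq y = 0"
    using A1 unfolding assumption_A1_def cont_pos_density_Rplus_def by blast
  interpret lr_setting \<theta> p q fp fq
    using model fp fq unfolding model_Ms_def by unfold_locales auto
  have "\<exists>g. distributed M (PiM {1..t} (\<lambda>_. lborel)) (\<lambda>\<omega>. \<lambda>i\<in>{1..t}. V i \<omega>) (\<lambda>v. ennreal (g v))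
      \<and> continuous_on (unit_cube t) g \<and> (\<forall>v\<in>unit_cube t. 0 < g v) \<and> (\<forall>v. v \<notin> unit_cube t \<longrightarrow> g v = 0)" for t
    unfolding V_def using distributed_V[OF model] continuous_on_joint_dens joint_dens_pos
    by (intro exI[of _ "joint_dens t"]) (simp add: joint_dens_def)
  moreover have "\<exists>h. distributed (uniform_measure M {\<omega> \<in> space M. \<forall>i\<in>{1..t}. V i \<omega> \<le> v i})
                   lborel (V (Suc t)) (\<lambda>x. ennreal (h x))
      \<and> continuous_on {0<..<1} h \<and> (\<forall>x\<in>{0<..<1}. 0 < h x) \<and> (\<forall>x. x \<notin> {0<..<1} \<longrightarrow> h x = 0)"
    if "1 \<le> t" "v \<in> unit_cube t" for t v
  proof -
    interpret box_conditioning \<theta> p q fp fq M \<tau> X t v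
      using model that by unfold_locales
    show ?thesis
      using conditional_density_V_next by (simp add: V_def box_event_def)
  qed
  ultimately show ?thesis
    using measure_V_box_pos[OF model] by (simp add: V_def)
qed

end
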